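(* Let $c>0$, $m\in\mathbb{R}$, $r\ge0$, and equip $T^1\mathbb{S}^2(c)$ with the Riemannian metric induced by $h_{m,r}$. Let $(x,e)\in T^1\mathbb{S}^2(c)$ and let $f\in T_x\mathbb{S}^2(c)$ be a unit vector with $\langle e,f\rangle=0$, so that $T_{(x,e)}T^1\mathbb{S}^2(c)$ is spanned by $e^h,f^h,f^v$. Then the sectional curvatures $\hat K$ of $(T^1\mathbb{S}^2(c),h_{m,r})$ at $(x,e)$ satisfy $$\hat K(e^h\wedge f^h)=c-\frac{3c^2}{2^{m+2}},\qquad \hat K(e^h\wedge f^v)=\hat K(f^h\wedge f^v)=\frac{c^2}{2^{m+2}}.$$ In particular, for $m=\log_2 c$ all three equal $c/4$.
   Context: For $c>0$, $\mathbb{S}^2(c)=\{x\in\mathbb{R}^3:|x|=1/\sqrt c\}$ with the induced metric (curvature $c$). $T^1\mathbb{S}^2(c)=\{(p,v)\in T\mathbb{S}^2(c):|v|=1\}$ is a hypersurface of $T\mathbb{S}^2(c)$. Lifts: for $(p,e)\in T\mathbb{S}^2(c)$ and $X\in T_p\mathbb{S}^2(c)$: - the vertical lift $X^v$ is the velocity at $t=0$ of $t\mapsto(p,e+tX)$ (in $\mathbb{R}^3\times\mathbb{R}^3$); - the horizontal lift $X^h$ is the velocity at $0$ of $t\mapsto(\gamma(t),V(t))$, with $\gamma(0)=p$, $\dot\gamma(0)=X$, and $V$ Levi-Civita parallel along $\gamma$ with $V(0)=e$. Generalized Cheeger–Gromoll metric: for $m\in\mathbb{R}$ and $r\ge0$,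 - $h_{m,r}(X^h,Y^h)=\langle X,Y\rangle$, - $h_{m,r}(X^h,Y^v)=0$, - $h_{m,r}(X^v,Y^v)=\omega^m(\langle X,Y\rangle+r\langle X,e\rangle\langle Y,e\rangle)$, where $\omega=1/(1+|e|^2)$. *)

theory Defs
  imports "HOL-Analysis.Analysis"
begin

definition sphere2 :: "real \<Rightarrow> (real^3) set" where
  "sphere2 c = {x. norm x = 1 / sqrt c}"

definition TS2 :: "real \<Rightarrow> ((real^3) \<times> (real^3)) set" where
  "TS2 c = {(p, v). p \<in> sphere2 c \<and> v \<bullet> p = 0}"

definition T1S2 :: "real \<Rightarrow> ((real^3) \<times> (real^3)) set" where
  "T1S2 c = {(p, v). (p, v) \<in> TS2 c \<and> norm v = 1}"

definition vlift :: "real^3 \<Rightarrow> real^3 \<Rightarrow> real^3 \<Rightarrow> (real^3) \<times> (real^3)" where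
  "vlift p e X = vector_derivative (\<lambda>t. (p, e + t *\<^sub>R X)) (at 0)"

text \<open>Tangential projection onto the tangent plane of the sphere at p; the Levi-Civita
  connection of the induced metric is the tangential part of the ambient derivative.\<close>
definition tproj :: "real^3 \<Rightarrow> real^3 \<Rightarrow> real^3" where
  "tproj p w = w - ((w \<bullet> p) / (p \<bullet> p)) *\<^sub>R p"

definition parallel_along :: "(real \<Rightarrow> real^3) \<Rightarrow> (real \<Rightarrow> real^3) \<Rightarrow> bool" where
  "parallel_along \<gamma> V \<longleftrightarrow>
     (\<forall>t. V differentiable (at t) \<and> V t \<bullet> \<gamma> t = 0
          \<and> tproj (\<gamma> t) (vector_derivative V (at t)) = 0)"

definition is_hlift :: "real \<Rightarrow> real^3 \<Rightarrow> real^3 \<Rightarrow> real^3 \<Rightarrow> (real^3) \<times> (real^3) \<Rightarrow> bool" where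
  "is_hlift c p e X W \<longleftrightarrow>
     (\<exists>\<gamma> V. (\<forall>t. \<gamma> t \<in> sphere2 c \<and> \<gamma> differentiable (at t)) \<and> \<gamma> 0 = p
        \<and> (\<gamma> has_vector_derivative X) (at 0)
        \<and> V 0 = e \<and> parallel_along \<gamma> V
        \<and> ((\<lambda>t. (\<gamma> t, V t)) has_vector_derivative W) (at 0))"

definition hlift :: "real \<Rightarrow> real^3 \<Rightarrow> real^3 \<Rightarrow> real^3 \<Rightarrow> (real^3) \<times> (real^3)" where
  "hlift c p e X = (THE W. is_hlift c p e X W)"

definition lift_coords :: "real \<Rightarrow> real^3 \<Rightarrow> real^3 \<Rightarrow> (real^3) \<times> (real^3) \<Rightarrow> (real^3) \<times> (real^3)" where
  "lift_coords c p e \<xi> = (THE (X, Y). X \<bullet> p = 0 \<and> Y \<bullet> p = 0 \<and> \<xi> = hlift c p e X + vlift p e Y)"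

definition hCG :: "real \<Rightarrow> real \<Rightarrow> real \<Rightarrow> (real^3) \<times> (real^3)
                    \<Rightarrow> (real^3) \<times> (real^3) \<Rightarrow> (real^3) \<times> (real^3) \<Rightarrow> real" where
  "hCG c m r pe \<xi> \<eta> =
     (let p = fst pe; e = snd pe; \<omega> = 1 / (1 + (norm e)\<^sup>2);
          (X, Y) = lift_coords c p e \<xi>; (X', Y') = lift_coords c p e \<eta>
      in X \<bullet> X' + \<omega> powr m * (Y \<bullet> Y' + r * (Y \<bullet> e) * (Y' \<bullet> e)))"

definition partial :: "(real^3 \<Rightarrow> 'b::real_normed_vector) \<Rightarrow> 3 \<Rightarrow> real^3 \<Rightarrow> 'b" where
  "partial F i u = vector_derivative (\<lambda>t. F (u + t *\<^sub>R axis i 1)) (at 0)"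

fun Ck :: "nat \<Rightarrow> (real^3) set \<Rightarrow> (real^3 \<Rightarrow> 'b::real_normed_vector) \<Rightarrow> bool" where
  "Ck 0 U F = continuous_on U F"
| "Ck (Suc k) U F = ((\<forall>u\<in>U. F differentiable (at u)) \<and> (\<forall>i. Ck k U (partial F i)))"

definition smooth_on3 :: "(real^3) set \<Rightarrow> (real^3 \<Rightarrow> 'b::real_normed_vector) \<Rightarrow> bool" where
  "smooth_on3 U F \<longleftrightarrow> (\<forall>k. Ck k U F)"

definition dmap :: "(real^3 \<Rightarrow> 'b::real_normed_vector) \<Rightarrow> real^3 \<Rightarrow> real^3 \<Rightarrow> 'b" where
  "dmap F u a = (\<Sum>i\<in>UNIV. a $ i *\<^sub>R partial F i u)"

type_synonym metric3 = "real^3 \<Rightarrow> real^3^3"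

definition pullback_metric :: "real \<Rightarrow> real \<Rightarrow> real \<Rightarrow> (real^3 \<Rightarrow> (real^3) \<times> (real^3)) \<Rightarrow> metric3" where
  "pullback_metric c m r \<phi> u = (\<chi> i j. hCG c m r (\<phi> u) (partial \<phi> i u) (partial \<phi> j u))"

definition christoffel :: "metric3 \<Rightarrow> 3 \<Rightarrow> 3 \<Rightarrow> 3 \<Rightarrow> real^3 \<Rightarrow> real" where
  "christoffel g k i j u = 1/2 * (\<Sum>l\<in>UNIV. matrix_inv (g u) $ k $ l *
      (partial (\<lambda>v. g v $ j $ l) i u + partial (\<lambda>v. g v $ i $ l) j u - partial (\<lambda>v. g v $ i $ j) l u))"

text \<open>R(d_i,d_j)d_k = sum_l R^l_{ijk} d_l with R(X,Y)Z = nabla_X nabla_Y Z - nabla_Y nabla_X Z - nabla_[X,Y] Z.\<close>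
definition riemann :: "metric3 \<Rightarrow> 3 \<Rightarrow> 3 \<Rightarrow> 3 \<Rightarrow> 3 \<Rightarrow> real^3 \<Rightarrow> real" where
  "riemann g l i j k u =
     partial (\<lambda>v. christoffel g l j k v) i u - partial (\<lambda>v. christoffel g l i k v) j u
     + (\<Sum>n\<in>UNIV. christoffel g n j k u * christoffel g l i n u
                  - christoffel g n i k u * christoffel g l j n u)"

definition gform :: "metric3 \<Rightarrow> real^3 \<Rightarrow> real^3 \<Rightarrow> real^3 \<Rightarrow> real" where
  "gform g u a b = (\<Sum>i\<in>UNIV. \<Sum>j\<in>UNIV. a $ i * b $ j * g u $ i $ j)"

definition sectional_curvature :: "metric3 \<Rightarrow> real^3 \<Rightarrow> real^3 \<Rightarrow> real^3 \<Rightarrow> real" where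
  "sectional_curvature g u a b =
     (\<Sum>i\<in>UNIV. \<Sum>j\<in>UNIV. \<Sum>k\<in>UNIV. \<Sum>l\<in>UNIV. \<Sum>n\<in>UNIV.
        a $ i * b $ j * b $ k * a $ l * riemann g n i j k u * g u $ n $ l)
     / (gform g u a a * gform g u b b - (gform g u a b)\<^sup>2)"

end

theory Submission
  imports Defs
begin

text \<open>
  The sectional curvatures are computed with Cartan's method of moving frames.

  Along a chart \<open>\<phi> = (P, V)\<close> of \<open>T\<^sup>1\<bbbS>\<^sup>2(c)\<close> the vectors \<open>E\<^sub>1 = \<surd>c P\<close>, \<open>E\<^sub>2 = V\<close>,
  \<open>E\<^sub>3 = \<surd>c P \<times> V\<close> form an orthonormal frame of \<open>\<real>\<^sup>3\<close>.  The connection forms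
  \<open>w\<^sub>1 = E\<^sub>3 \<cdot> dE\<^sub>2\<close>, \<open>w\<^sub>2 = E\<^sub>3 \<cdot> dE\<^sub>1\<close>, \<open>w\<^sub>3 = E\<^sub>2 \<cdot> dE\<^sub>1\<close> form a coframe of the chart domain
  satisfying the Maurer--Cartan structure equations \<open>dw\<^sub>a = w\<^sub>a\<^sub>+\<^sub>1 \<and> w\<^sub>a\<^sub>+\<^sub>2\<close> (indices mod 3),
  and the pull-back of \<open>h\<^sub>m\<^sub>,\<^sub>r\<close> is \<open>\<lambda> w\<^sub>1\<^sup>2 + (w\<^sub>2\<^sup>2 + w\<^sub>3\<^sup>2)/c\<close> with \<open>\<lambda> = 2\<^sup>-\<^sup>m\<close>
  (on unit vectors \<open>\<omega> = 1/2\<close>, and the \<open>r\<close>-term vanishes because vertical vectors tangent to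
  the unit sphere bundle are orthogonal to \<open>e\<close>).

  For any metric \<open>g = \<Sum>\<^sub>a D\<^sub>a w\<^sub>a\<^sup>2\<close> with constant \<open>D\<^sub>a\<close> and such a coframe, the Koszul formula
  shows that the connection coefficients in the frame are constants \<open>L\<^sup>a\<^sub>p\<^sub>q\<close>, and the
  Riemann tensor in the frame is an explicit constant tensor \<open>T\<^sup>a\<^sub>p\<^sub>q\<^sub>r\<close>; the sectional
  curvature of the plane of two frame vectors \<open>p \<noteq> q\<close> is \<open>T\<^sup>p\<^sub>p\<^sub>q\<^sub>q / D\<^sub>q\<close>.

  In the main theorem \<open>e\<^sup>h, f\<^sup>h, f\<^sup>v\<close> turn out to be multiples of the frame
  vectors 3, 2, 1, and the three frame curvatures evaluate to \<open>c(1 - 3\<lambda>c/4)\<close> and \<open>\<lambda>c\<^sup>2/4\<close>.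
\<close>

section \<open>Coordinate partial derivatives\<close>

text \<open>Each
  differentiation rule below is the corresponding rule for Fr\'echet derivatives, transferred
  through \<open>partial_eq_derivative\<close>.\<close>

lemma has_vector_derivative_along_line:
  fixes F :: "real^3 \<Rightarrow> 'b::real_normed_vector"
  assumes "(F has_derivative F') (at (u + t *\<^sub>R v))"
  shows "((\<lambda>s. F (u + s *\<^sub>R v)) has_vector_derivative F' v) (at t)"
proof -
  have line: "((\<lambda>s. u + s *\<^sub>R v) has_derivative (\<lambda>s. s *\<^sub>R v)) (at t)"
    by (auto intro!: derivative_eq_intros)
  have "((F \<circ> (\<lambda>s. u + s *\<^sub>R v)) has_derivative (F' \<circ> (\<lambda>s. s *\<^sub>R v))) (at t)"
    by (rule diff_chain_at[OF line]) (use assms in simp)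
  moreover have "F' \<circ> (\<lambda>s. s *\<^sub>R v) = (\<lambda>s. s *\<^sub>R F' v)"
    using has_derivative_linear[OF assms] by (auto simp: linear_scale o_def)
  ultimately show ?thesis by (simp add: has_vector_derivative_def o_def)
qed

lemma partial_eq_derivative:
  fixes F :: "real^3 \<Rightarrow> 'b::real_normed_vector"
  assumes "(F has_derivative F') (at u)"
  shows "partial F i u = F' (axis i 1)"
  unfolding partial_def
  using has_vector_derivative_along_line[of F F' u 0 "axis i 1"] assms
  by (simp add: vector_derivative_at)

lemma partial_cong_open:
  fixes F G :: "real^3 \<Rightarrow> 'b::real_normed_vector"
  assumes "open S" "u \<in> S" "\<And>v. v \<in> S \<Longrightarrow> F v = G v"
  shows "partial F i u = partial G i u"
proof -
  have "open ((\<lambda>t::real. u + t *\<^sub>R axis i 1) -` S)"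
    by (rule continuous_open_vimage[OF assms(1)]) (intro continuous_intros)
  then have "eventually (\<lambda>t. u + t *\<^sub>R axis i 1 \<in> S) (nhds (0::real))"
    using eventually_nhds_in_open assms(2) by fastforce
  then have "eventually (\<lambda>t. t \<in> UNIV \<longrightarrow> F (u + t *\<^sub>R axis i 1) = G (u + t *\<^sub>R axis i 1))
      (nhds (0::real))"
    by (auto elim!: eventually_mono simp: assms(3))
  then show ?thesis
    unfolding partial_def by (intro vector_derivative_cong_eq) auto
qed

lemma partial_const_on:
  fixes F :: "real^3 \<Rightarrow> 'b::real_normed_vector"
  assumes "open U" "v \<in> U" "\<And>v. v \<in> U \<Longrightarrow> F v = k"
  shows "partial F i v = 0"
proof -
  have "((\<lambda>v::real^3. k) has_derivative (\<lambda>h. 0)) (at v)" by simp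
  from partial_eq_derivative[OF this] have "partial (\<lambda>v. k) i v = 0" by simp
  moreover have "partial F i v = partial (\<lambda>v. k) i v"
    by (rule partial_cong_open[OF assms(1,2)]) (simp add: assms(3))
  ultimately show ?thesis by simp
qed

lemma partial_const: "partial (\<lambda>v. k) i u = 0"
  using partial_const_on[of UNIV u "\<lambda>v. k" k] by simp

lemma partial_linear:
  assumes "bounded_linear L" "F differentiable (at u)"
  shows "partial (\<lambda>v. L (F v)) i u = L (partial F i u)"
proof -
  obtain F' where F': "(F has_derivative F') (at u)"
    using assms by (auto simp: differentiable_def)
  have "((\<lambda>v. L (F v)) has_derivative (\<lambda>h. L (F' h))) (at u)"
    using bounded_linear.has_derivative[OF assms(1) F'] .
  from partial_eq_derivative[OF this] show ?thesis
    using partial_eq_derivative[OF F'] by simp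
qed

lemma partial_bilinear:
  assumes "bounded_bilinear B" "F differentiable (at u)" "G differentiable (at u)"
  shows "partial (\<lambda>v. B (F v) (G v)) i u = B (F u) (partial G i u) + B (partial F i u) (G u)"
proof -
  obtain F' where F': "(F has_derivative F') (at u)"
    using assms by (auto simp: differentiable_def)
  obtain G' where G': "(G has_derivative G') (at u)"
    using assms by (auto simp: differentiable_def)
  have "((\<lambda>v. B (F v) (G v)) has_derivative (\<lambda>h. B (F u) (G' h) + B (F' h) (G u))) (at u)"
    using bounded_bilinear.FDERIV[OF assms(1) F' G'] .
  from partial_eq_derivative[OF this] show ?thesis
    using partial_eq_derivative[OF F'] partial_eq_derivative[OF G'] by simp
qed

lemma partial_add:
  fixes F G :: "real^3 \<Rightarrow> 'b::real_normed_vector"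
  assumes "F differentiable (at u)" "G differentiable (at u)"
  shows "partial (\<lambda>v. F v + G v) i u = partial F i u + partial G i u"
proof -
  obtain F' where F': "(F has_derivative F') (at u)"
    using assms by (auto simp: differentiable_def)
  obtain G' where G': "(G has_derivative G') (at u)"
    using assms by (auto simp: differentiable_def)
  have "((\<lambda>v. F v + G v) has_derivative (\<lambda>h. F' h + G' h)) (at u)"
    using has_derivative_add[OF F' G'] .
  from partial_eq_derivative[OF this] show ?thesis
    using partial_eq_derivative[OF F'] partial_eq_derivative[OF G'] by simp
qed

lemma partial_sum:
  fixes F :: "'a \<Rightarrow> real^3 \<Rightarrow> 'b::real_normed_vector"
  assumes "finite A" "\<And>a. a \<in> A \<Longrightarrow> F a differentiable (at u)"
  shows "partial (\<lambda>v. \<Sum>a\<in>A. F a v) i u = (\<Sum>a\<in>A. partial (F a) i u)"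
proof -
  have "\<forall>a\<in>A. \<exists>F'. (F a has_derivative F') (at u)"
    using assms(2) by (auto simp: differentiable_def)
  then obtain F' where F': "\<And>a. a \<in> A \<Longrightarrow> (F a has_derivative F' a) (at u)" by metis
  have "((\<lambda>v. \<Sum>a\<in>A. F a v) has_derivative (\<lambda>h. \<Sum>a\<in>A. F' a h)) (at u)"
    using has_derivative_sum[of A F F'] F' by auto
  from partial_eq_derivative[OF this] show ?thesis
    by (auto intro!: sum.cong simp: partial_eq_derivative[OF F'])
qed

lemma partial_inverse:
  fixes F :: "real^3 \<Rightarrow> real"
  assumes "F differentiable (at u)" "F u \<noteq> 0"
  shows "partial (\<lambda>v. inverse (F v)) i u = - (partial F i u * (inverse (F u) * inverse (F u)))"
proof -
  obtain F' where F': "(F has_derivative F') (at u)"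
    using assms by (auto simp: differentiable_def)
  have "((\<lambda>v. inverse (F v)) has_derivative (\<lambda>h. - (inverse (F u) * F' h * inverse (F u)))) (at u)"
    using Deriv.has_derivative_inverse[OF assms(2) F'] .
  from partial_eq_derivative[OF this] show ?thesis
    using partial_eq_derivative[OF F'] by (simp add: ac_simps)
qed

lemma partial_vec_nth:
  fixes F :: "real^3 \<Rightarrow> real^'n"
  assumes "F differentiable (at v)"
  shows "partial (\<lambda>v. F v $ i) l v = partial F l v $ i"
  using partial_linear[OF bounded_linear_vec_nth assms] .

lemma partial_mult:
  fixes f g :: "real^3 \<Rightarrow> real"
  assumes "f differentiable (at v)" "g differentiable (at v)"
  shows "partial (\<lambda>v. f v * g v) l v = f v * partial g l v + partial f l v * g v"
  using partial_bilinear[OF bounded_bilinear_mult assms] .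

lemma partial_cmult:
  fixes f :: "real^3 \<Rightarrow> real"
  assumes "f differentiable (at v)"
  shows "partial (\<lambda>v. c * f v) l v = c * partial f l v"
  using partial_mult[of "\<lambda>v. c" v f l] assms by (simp add: partial_const)

section \<open>Functions of class \<open>C\<^sup>k\<close>\<close>

lemma Ck_cong_open:
  fixes F G :: "real^3 \<Rightarrow> 'b::real_normed_vector"
  assumes "open U" "\<And>v. v \<in> U \<Longrightarrow> F v = G v"
  shows "Ck k U F = Ck k U G"
  using assms(2)
proof (induction k arbitrary: F G)
  case 0
  have "continuous_on U F = continuous_on U G"
    by (rule continuous_on_cong) (auto simp: 0)
  then show ?case by simp
next
  case (Suc k)
  have "F differentiable (at u) \<longleftrightarrow> G differentiable (at u)" if "u \<in> U" for u
    unfolding differentiable_def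
    using has_derivative_transform_within_open[OF _ assms(1) that] Suc.prems by metis
  moreover have "Ck k U (partial F i) = Ck k U (partial G i)" for i
    by (rule Suc.IH) (use partial_cong_open[OF assms(1)] Suc.prems in blast)
  ultimately show ?case by auto
qed

lemma Ck_Suc_imp_Ck:
  fixes F :: "real^3 \<Rightarrow> 'b::real_normed_vector"
  shows "Ck (Suc k) U F \<Longrightarrow> Ck k U F"
proof (induction k arbitrary: F)
  case 0
  then have "F differentiable_on U"
    by (intro differentiable_at_imp_differentiable_on) auto
  then show ?case by (simp add: differentiable_imp_continuous_on)
next
  case (Suc k)
  then show ?case by simp
qed

lemma Ck_mono:
  fixes F :: "real^3 \<Rightarrow> 'b::real_normed_vector"
  shows "Ck n U F \<Longrightarrow> k \<le> n \<Longrightarrow> Ck k U F"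
proof (induction n)
  case 0
  then show ?case by simp
next
  case (Suc n)
  then show ?case using Ck_Suc_imp_Ck le_Suc_eq by blast
qed

lemma Ck_differentiable: "Ck k U F \<Longrightarrow> 0 < k \<Longrightarrow> v \<in> U \<Longrightarrow> F differentiable (at v)"
  by (cases k) auto

lemma Ck_subset:
  fixes F :: "real^3 \<Rightarrow> 'b::real_normed_vector"
  assumes "U' \<subseteq> U"
  shows "Ck k U F \<Longrightarrow> Ck k U' F"
proof (induction k arbitrary: F)
  case 0
  then show ?case using continuous_on_subset assms by auto
next
  case (Suc k)
  then show ?case using assms by auto
qed

lemma Ck_const: "Ck k U (\<lambda>v. c)"
proof (induction k arbitrary: c)
  case 0
  then show ?case by simp
next
  case (Suc k)
  have "partial (\<lambda>v. c) i = (\<lambda>v. 0)" for i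
    by (rule ext) (rule partial_const)
  then show ?case using Suc.IH by simp
qed

lemma Ck_linear:
  fixes F :: "real^3 \<Rightarrow> 'b::real_normed_vector"
  assumes "bounded_linear L" "open U"
  shows "Ck k U F \<Longrightarrow> Ck k U (\<lambda>v. L (F v))"
proof (induction k arbitrary: F)
  case 0
  then show ?case using bounded_linear.continuous_on[OF assms(1)] by auto
next
  case (Suc k)
  then have dF: "\<forall>u\<in>U. F differentiable (at u)" and dpF: "\<And>i. Ck k U (partial F i)"
    by simp_all
  have "\<forall>u\<in>U. (\<lambda>v. L (F v)) differentiable (at u)"
    using dF bounded_linear.has_derivative[OF assms(1)] unfolding differentiable_def by blast
  moreover have "Ck k U (partial (\<lambda>v. L (F v)) i)" for i
  proof -
    have "Ck k U (\<lambda>v. L (partial F i v))" using Suc.IH dpF by blast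
    then show ?thesis
      using Ck_cong_open[OF assms(2), of "partial (\<lambda>v. L (F v)) i" "\<lambda>v. L (partial F i v)" k]
        partial_linear[OF assms(1)] dF by simp
  qed
  ultimately show ?case by simp
qed

lemma Ck_add:
  fixes F G :: "real^3 \<Rightarrow> 'b::real_normed_vector"
  assumes "open U"
  shows "Ck k U F \<Longrightarrow> Ck k U G \<Longrightarrow> Ck k U (\<lambda>v. F v + G v)"
proof (induction k arbitrary: F G)
  case 0
  then show ?case by (simp add: continuous_on_add)
next
  case (Suc k)
  then have dF: "\<forall>u\<in>U. F differentiable (at u)" and dpF: "\<And>i. Ck k U (partial F i)"
    and dG: "\<forall>u\<in>U. G differentiable (at u)" and dpG: "\<And>i. Ck k U (partial G i)"
    by simp_all
  have "Ck k U (partial (\<lambda>v. F v + G v) i)" for i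
  proof -
    have "Ck k U (\<lambda>v. partial F i v + partial G i v)" using Suc.IH dpF dpG by blast
    moreover have "partial (\<lambda>v. F v + G v) i v = partial F i v + partial G i v" if "v \<in> U" for v
      using partial_add dF dG that by blast
    ultimately show ?thesis
      using Ck_cong_open[OF assms, of "partial (\<lambda>v. F v + G v) i"
          "\<lambda>v. partial F i v + partial G i v" k] by simp
  qed
  then show ?case using dF dG by (simp add: differentiable_add)
qed

lemma Ck_bilinear:
  assumes "bounded_bilinear B" "open U"
  shows "Ck k U F \<Longrightarrow> Ck k U G \<Longrightarrow> Ck k U (\<lambda>v. B (F v) (G v))"
proof (induction k arbitrary: F G)
  case 0
  then show ?case using bounded_bilinear.continuous_on[OF assms(1)] by simp
next
  case (Suc k)
  then have dF: "\<forall>u\<in>U. F differentiable (at u)" and dpF: "\<And>i. Ck k U (partial F i)"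
    and dG: "\<forall>u\<in>U. G differentiable (at u)" and dpG: "\<And>i. Ck k U (partial G i)"
    and F: "Ck k U F" and G: "Ck k U G"
    using Ck_Suc_imp_Ck by simp_all blast+
  have "\<forall>u\<in>U. (\<lambda>v. B (F v) (G v)) differentiable (at u)"
    using dF dG bounded_bilinear.FDERIV[OF assms(1)] unfolding differentiable_def by blast
  moreover have "Ck k U (partial (\<lambda>v. B (F v) (G v)) i)" for i
  proof -
    have "Ck k U (\<lambda>v. B (F v) (partial G i v) + B (partial F i v) (G v))"
      using Ck_add[OF assms(2)] Suc.IH F G dpF dpG by blast
    then show ?thesis
      using Ck_cong_open[OF assms(2), of "partial (\<lambda>v. B (F v) (G v)) i"
          "\<lambda>v. B (F v) (partial G i v) + B (partial F i v) (G v)" k]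
        partial_bilinear[OF assms(1)] dF dG by simp
  qed
  ultimately show ?case by simp
qed

lemma Ck_mult:
  fixes F G :: "real^3 \<Rightarrow> real"
  shows "open U \<Longrightarrow> Ck k U F \<Longrightarrow> Ck k U G \<Longrightarrow> Ck k U (\<lambda>v. F v * G v)"
  using Ck_bilinear[OF bounded_bilinear_mult] by blast

lemma Ck_scaleR:
  fixes F :: "real^3 \<Rightarrow> real" and G :: "real^3 \<Rightarrow> 'b::real_normed_vector"
  shows "open U \<Longrightarrow> Ck k U F \<Longrightarrow> Ck k U G \<Longrightarrow> Ck k U (\<lambda>v. F v *\<^sub>R G v)"
  using Ck_bilinear[OF bounded_bilinear_scaleR] by blast

lemma Ck_inner:
  fixes F G :: "real^3 \<Rightarrow> 'b::real_inner"
  shows "open U \<Longrightarrow> Ck k U F \<Longrightarrow> Ck k U G \<Longrightarrow> Ck k U (\<lambda>v. F v \<bullet> G v)"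
  using Ck_bilinear[OF bounded_bilinear_inner] by blast

lemma Ck_cross:
  "open U \<Longrightarrow> Ck k U F \<Longrightarrow> Ck k U G \<Longrightarrow> Ck k U (\<lambda>v. cross3 (F v) (G v))"
  using Ck_bilinear bilinear_conv_bounded_bilinear bilinear_cross by blast

lemma Ck_minus:
  fixes F :: "real^3 \<Rightarrow> 'b::real_normed_vector"
  shows "open U \<Longrightarrow> Ck k U F \<Longrightarrow> Ck k U (\<lambda>v. - F v)"
  using Ck_linear[OF bounded_linear_minus[OF bounded_linear_ident]] by blast

lemma Ck_diff:
  fixes F G :: "real^3 \<Rightarrow> 'b::real_normed_vector"
  assumes "open U" "Ck k U F" "Ck k U G"
  shows "Ck k U (\<lambda>v. F v - G v)"
  using Ck_add[OF assms(1) assms(2) Ck_minus[OF assms(1,3)]] by simp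

lemma Ck_sum:
  fixes F :: "'a \<Rightarrow> real^3 \<Rightarrow> 'b::real_normed_vector"
  assumes "open U" "finite A"
  shows "(\<And>a. a \<in> A \<Longrightarrow> Ck k U (F a)) \<Longrightarrow> Ck k U (\<lambda>v. \<Sum>a\<in>A. F a v)"
  using assms(2)
proof (induction A rule: finite_induct)
  case empty
  then show ?case using Ck_const by simp
next
  case (insert x A)
  then show ?case using Ck_add[OF assms(1), of k "F x" "\<lambda>v. \<Sum>a\<in>A. F a v"] by simp
qed

lemma Ck_inverse:
  fixes F :: "real^3 \<Rightarrow> real"
  assumes "open U"
  shows "Ck k U F \<Longrightarrow> (\<And>v. v \<in> U \<Longrightarrow> F v \<noteq> 0) \<Longrightarrow> Ck k U (\<lambda>v. inverse (F v))"
proof (induction k arbitrary: F)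
  case 0
  then show ?case by (auto intro!: continuous_on_inverse)
next
  case (Suc k)
  then have dF: "\<forall>u\<in>U. F differentiable (at u)" and dpF: "\<And>i. Ck k U (partial F i)"
    by simp_all
  have "\<forall>u\<in>U. (\<lambda>v. inverse (F v)) differentiable (at u)"
    using dF Suc.prems(2) unfolding differentiable_def by (blast intro: Deriv.has_derivative_inverse)
  moreover have "Ck k U (partial (\<lambda>v. inverse (F v)) i)" for i
  proof -
    have I: "Ck k U (\<lambda>v. inverse (F v))" using Suc.IH[of F] Suc.prems Ck_Suc_imp_Ck by blast
    have "Ck k U (\<lambda>v. - (partial F i v * (inverse (F v) * inverse (F v))))"
      by (intro Ck_minus Ck_mult assms I dpF)
    then show ?thesis
      using Ck_cong_open[OF assms, of "partial (\<lambda>v. inverse (F v)) i"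
          "\<lambda>v. - (partial F i v * (inverse (F v) * inverse (F v)))" k]
        partial_inverse dF Suc.prems(2) by simp
  qed
  ultimately show ?case by simp
qed

lemma Ck_vec_nth:
  fixes F :: "real^3 \<Rightarrow> real^'n"
  shows "open U \<Longrightarrow> Ck k U F \<Longrightarrow> Ck k U (\<lambda>v. F v $ i)"
  using Ck_linear[OF bounded_linear_vec_nth] by blast

lemma Ck_vec_lambda:
  fixes f :: "'n::finite \<Rightarrow> real^3 \<Rightarrow> real"
  assumes U: "open U" and C: "\<And>i. Ck k U (f i)"
  shows "Ck k U (\<lambda>v. \<chi> i. f i v)"
proof -
  have "(\<chi> i. f i v) = (\<Sum>i\<in>UNIV. f i v *\<^sub>R axis i (1::real))" for v
    using basis_expansion[of "\<chi> i. f i v"] by (simp add: scalar_mult_eq_scaleR)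
  then have "(\<lambda>v. \<chi> i. f i v) = (\<lambda>v. \<Sum>i\<in>UNIV. f i v *\<^sub>R axis i (1::real))" by simp
  moreover have "Ck k U (\<lambda>v. \<Sum>i\<in>UNIV. f i v *\<^sub>R axis i (1::real))"
    by (intro Ck_sum[OF U] Ck_scaleR[OF U] Ck_const C) auto
  ultimately show ?thesis by simp
qed

section \<open>Symmetry of mixed partial derivatives\<close>

lemma partial_has_real_derivative_along_axis:
  fixes F :: "real^3 \<Rightarrow> real"
  assumes "F differentiable (at (v + s *\<^sub>R axis i 1))"
  shows "((\<lambda>s. F (v + s *\<^sub>R axis i 1)) has_real_derivative partial F i (v + s *\<^sub>R axis i 1)) (at s)"
proof -
  obtain D where D: "(F has_derivative D) (at (v + s *\<^sub>R axis i 1))"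
    using assms unfolding differentiable_def by blast
  show ?thesis
    using has_vector_derivative_along_line[OF D] partial_eq_derivative[OF D]
    by (simp add: has_real_derivative_iff_has_vector_derivative)
qed

lemma second_difference_mean_value:
  fixes F :: "real^3 \<Rightarrow> real"
  assumes C: "Ck 2 U F" and h: "h > 0"
    and square: "\<And>s t. 0 \<le> s \<Longrightarrow> s \<le> h \<Longrightarrow> 0 \<le> t \<Longrightarrow> t \<le> h \<Longrightarrow>
                    u + s *\<^sub>R axis i 1 + t *\<^sub>R axis j 1 \<in> U"
  shows "\<exists>s t. 0 < s \<and> s < h \<and> 0 < t \<and> t < h \<and>
     F (u + h *\<^sub>R axis i 1 + h *\<^sub>R axis j 1) - F (u + h *\<^sub>R axis i 1) - F (u + h *\<^sub>R axis j 1) + F u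
       = h * h * partial (partial F i) j (u + s *\<^sub>R axis i 1 + t *\<^sub>R axis j 1)"
proof -
  have dF: "F differentiable (at v)" and dFi: "partial F i differentiable (at v)" if "v \<in> U" for v
    using C that by (simp_all add: numeral_2_eq_2)
  define G where "G s = F ((u + h *\<^sub>R axis j 1) + s *\<^sub>R axis i 1) - F (u + s *\<^sub>R axis i 1)" for s
  define G' where "G' s = partial F i ((u + h *\<^sub>R axis j 1) + s *\<^sub>R axis i 1)
                          - partial F i (u + s *\<^sub>R axis i 1)" for s
  have "DERIV G s :> G' s" if "0 \<le> s" "s \<le> h" for s
  proof -
    have "(u + h *\<^sub>R axis j 1) + s *\<^sub>R axis i 1 \<in> U" "u + s *\<^sub>R axis i 1 \<in> U"
      using square[of s h] square[of s 0] that h by (simp_all add: add_ac)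
    then show ?thesis unfolding G_def G'_def
      by (intro DERIV_diff partial_has_real_derivative_along_axis dF)
  qed
  then obtain s where s: "0 < s" "s < h" "G h - G 0 = h * G' s"
    using MVT2[OF h, of G G'] by auto
  define H where "H t = partial F i ((u + s *\<^sub>R axis i 1) + t *\<^sub>R axis j 1)" for t
  have "DERIV H t :> partial (partial F i) j ((u + s *\<^sub>R axis i 1) + t *\<^sub>R axis j 1)"
    if "0 \<le> t" "t \<le> h" for t
    unfolding H_def
    using square[of s t] that s by (intro partial_has_real_derivative_along_axis dFi) simp
  then obtain t where t: "0 < t" "t < h"
    "H h - H 0 = h * partial (partial F i) j ((u + s *\<^sub>R axis i 1) + t *\<^sub>R axis j 1)"
    using MVT2[OF h, of H "\<lambda>t. partial (partial F i) j (u + s *\<^sub>R axis i 1 + t *\<^sub>R axis j 1)"]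
    by auto
  have "G h - G 0 = h * (H h - H 0)" using s(3) by (simp add: G'_def H_def add_ac)
  then have "F (u + h *\<^sub>R axis i 1 + h *\<^sub>R axis j 1) - F (u + h *\<^sub>R axis i 1)
      - F (u + h *\<^sub>R axis j 1) + F u
      = h * h * partial (partial F i) j (u + s *\<^sub>R axis i 1 + t *\<^sub>R axis j 1)"
    using t(3) by (simp add: G_def add_ac)
  then show ?thesis using s t by blast
qed

lemma dist_axis_square:
  fixes u :: "real^3"
  assumes "0 \<le> s" "s \<le> h" "0 \<le> t" "t \<le> h"
  shows "dist (u + s *\<^sub>R axis a 1 + t *\<^sub>R axis b 1) u \<le> 2 * h"
proof -
  have "dist (u + s *\<^sub>R axis a 1 + t *\<^sub>R axis b 1) u = norm (s *\<^sub>R axis a (1::real) + t *\<^sub>R axis b 1)"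
    by (simp add: dist_norm)
  also have "\<dots> \<le> norm (s *\<^sub>R axis a (1::real)) + norm (t *\<^sub>R axis b (1::real))"
    by (rule norm_triangle_ineq)
  also have "\<dots> \<le> 2 * h" using assms by simp
  finally show ?thesis .
qed

(* Both mixed partials are, up to the factor h\<^sup>2, the same second difference; hence they
   take equal values at two points near u. *)
lemma mixed_partials_meet:
  fixes F :: "real^3 \<Rightarrow> real"
  assumes C: "Ck 2 U F" and h: "h > 0"
    and square: "\<And>s t a b. 0 \<le> s \<Longrightarrow> s \<le> h \<Longrightarrow> 0 \<le> t \<Longrightarrow> t \<le> h \<Longrightarrow>
                    u + s *\<^sub>R axis a 1 + t *\<^sub>R axis b 1 \<in> U"
  obtains p q where "dist p u \<le> 2 * h" "dist q u \<le> 2 * h"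
    "partial (partial F i) j p = partial (partial F j) i q"
proof -
  obtain s t where st: "0 < s" "s < h" "0 < t" "t < h"
     "F (u + h *\<^sub>R axis i 1 + h *\<^sub>R axis j 1) - F (u + h *\<^sub>R axis i 1) - F (u + h *\<^sub>R axis j 1) + F u
       = h * h * partial (partial F i) j (u + s *\<^sub>R axis i 1 + t *\<^sub>R axis j 1)"
    using second_difference_mean_value[OF C h, of u i j] square by blast
  obtain s' t' where st': "0 < s'" "s' < h" "0 < t'" "t' < h"
     "F (u + h *\<^sub>R axis j 1 + h *\<^sub>R axis i 1) - F (u + h *\<^sub>R axis j 1) - F (u + h *\<^sub>R axis i 1) + F u
       = h * h * partial (partial F j) i (u + s' *\<^sub>R axis j 1 + t' *\<^sub>R axis i 1)"
    using second_difference_mean_value[OF C h, of u j i] square by blast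
  have corner: "u + h *\<^sub>R axis j 1 + h *\<^sub>R axis i 1 = u + h *\<^sub>R axis i 1 + h *\<^sub>R axis j 1"
    by (simp add: add_ac)
  have "h * h * partial (partial F i) j (u + s *\<^sub>R axis i 1 + t *\<^sub>R axis j 1)
      = h * h * partial (partial F j) i (u + s' *\<^sub>R axis j 1 + t' *\<^sub>R axis i 1)"
    using st(5) st'(5) unfolding corner by linarith
  moreover have "dist (u + s *\<^sub>R axis i 1 + t *\<^sub>R axis j 1) u \<le> 2 * h"
    "dist (u + s' *\<^sub>R axis j 1 + t' *\<^sub>R axis i 1) u \<le> 2 * h"
    using st st' by (simp_all add: dist_axis_square)
  ultimately show ?thesis using that h by simp
qed

(* Schwarz's theorem, by continuity of the mixed partials. *)
lemma partial_commute_real: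
  fixes F :: "real^3 \<Rightarrow> real"
  assumes U: "open U" and u: "u \<in> U" and C: "Ck 2 U F"
  shows "partial (partial F i) j u = partial (partial F j) i u"
proof (rule ccontr)
  define A where "A = partial (partial F i) j"
  define B where "B = partial (partial F j) i"
  assume "partial (partial F i) j u \<noteq> partial (partial F j) i u"
  then have \<epsilon>: "\<bar>A u - B u\<bar> / 3 > 0" by (simp add: A_def B_def)
  have "continuous_on U A" "continuous_on U B"
    using C by (simp_all add: A_def B_def numeral_2_eq_2)
  then have "isCont A u" "isCont B u"
    using U u continuous_on_eq_continuous_at by blast+
  then obtain dA dB where dA: "dA > 0" "\<And>v. dist v u < dA \<Longrightarrow> dist (A v) (A u) < \<bar>A u - B u\<bar> / 3"
    and dB: "dB > 0" "\<And>v. dist v u < dB \<Longrightarrow> dist (B v) (B u) < \<bar>A u - B u\<bar> / 3"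
    using \<epsilon> unfolding continuous_at_eps_delta by metis
  obtain dU where dU: "dU > 0" "ball u dU \<subseteq> U"
    using U u open_contains_ball by blast
  define h where "h = min dA (min dB dU) / 3"
  have h: "h > 0" and h3: "2 * h < dA" "2 * h < dB" "2 * h < dU"
    using dA dB dU by (auto simp: h_def min_def)
  have "u + s *\<^sub>R axis a 1 + t *\<^sub>R axis b 1 \<in> U"
    if "0 \<le> s" "s \<le> h" "0 \<le> t" "t \<le> h" for s t and a b :: 3
    using dist_axis_square[OF that, of u a b] h3 dU(2) by (auto simp: dist_commute)
  then obtain p q where pq: "dist p u \<le> 2 * h" "dist q u \<le> 2 * h" "A p = B q"
    using mixed_partials_meet[OF C h, of u i j] unfolding A_def B_def by blast
  have "dist (A p) (A u) < \<bar>A u - B u\<bar> / 3" by (rule dA(2)) (use pq h3 in linarith)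
  moreover have "dist (B q) (B u) < \<bar>A u - B u\<bar> / 3" by (rule dB(2)) (use pq h3 in linarith)
  ultimately show False using pq(3) by (auto simp: dist_real_def abs_if split: if_splits)
qed

lemma partial_commute:
  fixes F :: "real^3 \<Rightarrow> real^'n"
  assumes U: "open U" and u: "u \<in> U" and C: "Ck 2 U F"
  shows "partial (partial F i) j u = partial (partial F j) i u"
proof -
  have dF: "F differentiable (at v)" and dFi: "partial F l differentiable (at v)" if "v \<in> U" for v l
    using C that by (simp_all add: numeral_2_eq_2)
  have "partial (partial F i) j u $ n = partial (partial (\<lambda>v. F v $ n) i) j u" for i j n
  proof -
    have "partial (partial F i) j u $ n = partial (\<lambda>v. partial F i v $ n) j u"
      by (rule partial_vec_nth[OF dFi[OF u], symmetric])
    also have "\<dots> = partial (partial (\<lambda>v. F v $ n) i) j u"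
      by (rule partial_cong_open[OF U u]) (simp add: partial_vec_nth[OF dF])
    finally show ?thesis .
  qed
  then show ?thesis
    using partial_commute_real[OF U u Ck_vec_nth[OF U C]] by (simp add: vec_eq_iff)
qed

lemma mod3_simps:
  "(1::3) + 1 = 2" "(1::3) + 2 = 3" "(2::3) + 1 = 3" "(2::3) + 2 = 1" "(3::3) + 1 = 1" "(3::3) + 2 = 2"
  "(4::3) = 1" "(5::3) = 2" "(6::3) = 3"
  "(1::3) \<noteq> 2" "(1::3) \<noteq> 3" "(2::3) \<noteq> 3" "(2::3) \<noteq> 1" "(3::3) \<noteq> 1" "(3::3) \<noteq> 2"
  by simp_all

lemma matrix_inv_right_inverse:
  fixes A B :: "real^'n^'n"
  assumes "A ** B = mat 1"
  shows "matrix_inv A = B"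
proof -
  have "\<exists>A'. A ** A' = mat 1 \<and> A' ** A = mat 1"
    using assms matrix_left_right_inverse by blast
  then have inv: "A ** matrix_inv A = mat 1 \<and> matrix_inv A ** A = mat 1"
    unfolding matrix_inv_def by (rule someI_ex)
  have "matrix_inv A = matrix_inv A ** (A ** B)" using assms by simp
  also have "\<dots> = (matrix_inv A ** A) ** B" by (simp add: matrix_mul_assoc)
  also have "\<dots> = B" using inv by simp
  finally show ?thesis .
qed

(* The adjugate shows that the entries of the inverse are rational in the entries. *)
definition adjugate3 :: "real^3^3 \<Rightarrow> real^3^3" where
  "adjugate3 M = (\<chi> i j. M$(j+1)$(i+1) * M$(j+2)$(i+2) - M$(j+1)$(i+2) * M$(j+2)$(i+1))"

lemma matrix_inv_adjugate3:
  assumes "det M \<noteq> 0"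
  shows "matrix_inv M = (1 / det M) *\<^sub>R adjugate3 M"
proof (rule matrix_inv_right_inverse)
  have "M ** adjugate3 M = det M *\<^sub>R mat 1"
    unfolding adjugate3_def
    by (simp add: vec_eq_iff forall_3 matrix_matrix_mult_def sum_3 det_3 mat_def mod3_simps
        algebra_simps)
  moreover have "M ** ((1 / det M) *\<^sub>R adjugate3 M) = (1 / det M) *\<^sub>R (M ** adjugate3 M)"
    by (simp add: vec_eq_iff matrix_matrix_mult_def sum_distrib_left algebra_simps)
  ultimately show "M ** ((1 / det M) *\<^sub>R adjugate3 M) = mat 1"
    using assms by simp
qed

section \<open>Metrics with a coframe of constant structure\<close>

text \<open>Let \<open>w\<^sub>1, w\<^sub>2, w\<^sub>3\<close> be a coframe with \<open>dw\<^sub>a = w\<^sub>a\<^sub>+\<^sub>1 \<and> w\<^sub>a\<^sub>+\<^sub>2\<close> (indices mod 3), let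
  \<open>e\<^sub>1, e\<^sub>2, e\<^sub>3\<close> be the dual frame and \<open>g = \<Sum>\<^sub>a D\<^sub>a w\<^sub>a\<^sup>2\<close> with constants \<open>D\<^sub>a \<noteq> 0\<close>.  Then
  \<open>w\<^sub>s(\<nabla>\<^sub>e\<^sub>p e\<^sub>q)\<close> and \<open>w\<^sub>a(R(e\<^sub>x, e\<^sub>y) e\<^sub>z)\<close> are the following constants; \<open>levi_civita\<close> is
  the permutation symbol \<open>\<epsilon>\<^sub>p\<^sub>q\<^sub>s\<close>.\<close>

definition levi_civita :: "3 \<Rightarrow> 3 \<Rightarrow> 3 \<Rightarrow> real" where
  "levi_civita p q s =
     (if q = p + 1 \<and> s = p + 2 then 1 else if q = p + 2 \<and> s = p + 1 then -1 else 0)"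

definition frame_connection :: "(3 \<Rightarrow> real) \<Rightarrow> 3 \<Rightarrow> 3 \<Rightarrow> 3 \<Rightarrow> real" where
  "frame_connection D s p q = levi_civita p q s * (D p - D q - D s) / (2 * D s)"

definition frame_riemann :: "(3 \<Rightarrow> 3 \<Rightarrow> 3 \<Rightarrow> real) \<Rightarrow> 3 \<Rightarrow> 3 \<Rightarrow> 3 \<Rightarrow> 3 \<Rightarrow> real" where
  "frame_riemann L a x y z =
     (\<Sum>p\<in>UNIV. L a p z * levi_civita p x y) + (\<Sum>q\<in>UNIV. L a x q * L q y z - L a y q * L q x z)"

lemma levi_civita_simps:
  "levi_civita 1 2 3 = 1" "levi_civita 2 3 1 = 1" "levi_civita 3 1 2 = 1"
  "levi_civita 1 3 2 = -1" "levi_civita 3 2 1 = -1" "levi_civita 2 1 3 = -1"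
  "levi_civita 1 1 a = 0" "levi_civita 2 2 a = 0" "levi_civita 3 3 a = 0"
  "levi_civita 1 a 1 = 0" "levi_civita 2 a 2 = 0" "levi_civita 3 a 3 = 0"
  "levi_civita a 1 1 = 0" "levi_civita a 2 2 = 0" "levi_civita a 3 3 = 0"
  using exhaust_3[of a] by (auto simp: levi_civita_def mod3_simps)

text \<open>The two algebraic identities behind the computation, stated for arbitrary numbers:
  \<open>wi, wj, wl\<close> stand for the frame components of coordinate vectors, \<open>dij a\<close> for
  \<open>\<partial>\<^sub>i (w\<^sub>a)\<^sub>j\<close>, and the hypotheses are the structure equations.\<close>

(* Koszul formula: the Christoffel combination of the derivatives of g is expressed
   through the frame connection. *)
lemma koszul_coframe_identity:
  fixes D wi wj wl dij dil dji djl dli dlj :: "3 \<Rightarrow> real"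
  assumes D_nonzero: "\<And>a. D a \<noteq> 0"
   and s1: "\<And>a. dji a = dij a - (wi (a+1) * wj (a+2) - wj (a+1) * wi (a+2))"
   and s2: "\<And>a. dli a = dil a - (wi (a+1) * wl (a+2) - wl (a+1) * wi (a+2))"
   and s3: "\<And>a. dlj a = djl a - (wj (a+1) * wl (a+2) - wl (a+1) * wj (a+2))"
  shows "1/2 * ((\<Sum>a\<in>UNIV. D a * (wj a * dil a + dij a * wl a))
              + (\<Sum>a\<in>UNIV. D a * (wi a * djl a + dji a * wl a))
              - (\<Sum>a\<in>UNIV. D a * (wi a * dlj a + dli a * wj a)))
       = (\<Sum>a\<in>UNIV. D a * wl a *
            (dij a + (\<Sum>p\<in>UNIV. \<Sum>q\<in>UNIV. frame_connection D a p q * (wi p * wj q))))"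
proof -
  have "D 1 \<noteq> 0" "D 2 \<noteq> 0" "D 3 \<noteq> 0" using D_nonzero by auto
  then show ?thesis
    unfolding s1 s2 s3
    by (simp add: sum_3 frame_connection_def levi_civita_simps mod3_simps field_simps)
qed

(* Curvature: the Riemann tensor of the coordinates, contracted with w_a, is expressed
   through the frame curvature. *)
lemma riemann_coframe_identity:
  fixes L :: "3 \<Rightarrow> 3 \<Rightarrow> 3 \<Rightarrow> real" and wi wj wk dij dji dik djk :: "3 \<Rightarrow> real" and a :: 3
    and ddi ddj :: real
  assumes "ddj = ddi"
    and s: "\<And>p. dji p = dij p - (wi (p+1) * wj (p+2) - wj (p+1) * wi (p+2))"
  shows "(ddi + (\<Sum>p\<in>UNIV. \<Sum>q\<in>UNIV. L a p q * (wj p * dik q + dij p * wk q)))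
       - (ddj + (\<Sum>p\<in>UNIV. \<Sum>q\<in>UNIV. L a p q * (wi p * djk q + dji p * wk q)))
       + (\<Sum>q\<in>UNIV. (\<Sum>p\<in>UNIV. L a p q * wi p) * (djk q + (\<Sum>r\<in>UNIV. \<Sum>s\<in>UNIV. L q r s * (wj r * wk s))))
       - (\<Sum>q\<in>UNIV. (\<Sum>p\<in>UNIV. L a p q * wj p) * (dik q + (\<Sum>r\<in>UNIV. \<Sum>s\<in>UNIV. L q r s * (wi r * wk s))))
     = (\<Sum>x\<in>UNIV. \<Sum>y\<in>UNIV. \<Sum>z\<in>UNIV. frame_riemann L a x y z * (wi x * wj y * wk z))"
  unfolding assms(1) s
  by (simp add: sum_3 frame_riemann_def levi_civita_simps mod3_simps algebra_simps)

lemma sum3_regroup: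
  fixes G d :: "3 \<Rightarrow> real" and L :: "3 \<Rightarrow> 3 \<Rightarrow> real" and x :: "3 \<Rightarrow> real" and y :: "3 \<Rightarrow> 3 \<Rightarrow> real"
  shows "(\<Sum>m\<in>UNIV. G m * (d m + (\<Sum>p\<in>UNIV. \<Sum>q\<in>UNIV. L p q * (x p * y q m))))
    = (\<Sum>m\<in>UNIV. G m * d m) + (\<Sum>q\<in>UNIV. (\<Sum>p\<in>UNIV. L p q * x p) * (\<Sum>m\<in>UNIV. y q m * G m))"
  by (simp add: sum_3 algebra_simps)

locale const_structure_coframe =
  fixes U :: "(real^3) set" and u0 :: "real^3" and w :: "3 \<Rightarrow> real^3 \<Rightarrow> real^3"
    and D :: "3 \<Rightarrow> real" and g :: metric3
  assumes U: "open U" and u0: "u0 \<in> U"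
    and coframe_Ck: "\<And>a. Ck 3 U (w a)"
    and D_nonzero: "\<And>a. D a \<noteq> 0"
    and metric_eq: "\<And>v. v \<in> U \<Longrightarrow> g v = (\<chi> i j. \<Sum>a\<in>UNIV. D a * (w a v $ i * w a v $ j))"
    and structure_eq: "\<And>v a i j. v \<in> U \<Longrightarrow> partial (w a) i v $ j - partial (w a) j v $ i
                  = w (a+1) v $ i * w (a+2) v $ j - w (a+1) v $ j * w (a+2) v $ i"
    and det_coframe_nonzero: "\<And>v. v \<in> U \<Longrightarrow> det (\<chi> a i. w a v $ i) \<noteq> 0"
begin

(* The coframe as a matrix, and w_a(\<nabla>_{\<partial>_i} \<partial>_j) as predicted by the frame connection. *)
definition W :: "real^3 \<Rightarrow> real^3^3" where "W v = (\<chi> a i. w a v $ i)"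

definition connection_term :: "3 \<Rightarrow> 3 \<Rightarrow> 3 \<Rightarrow> real^3 \<Rightarrow> real" where
  "connection_term a i j v =
     (\<Sum>p\<in>UNIV. \<Sum>q\<in>UNIV. frame_connection D a p q * (w p v $ i * w q v $ j))"

definition coframe_nabla :: "3 \<Rightarrow> 3 \<Rightarrow> 3 \<Rightarrow> real^3 \<Rightarrow> real" where
  "coframe_nabla a i j v = partial (w a) i v $ j + connection_term a i j v"

lemma Ck_coframe: "Ck 3 U (\<lambda>v. w a v $ i)"
  using Ck_vec_nth[OF U coframe_Ck] .

lemma Ck_coframe_partial: "Ck 2 U (\<lambda>v. partial (w a) i v $ j)"
proof -
  have "Ck 2 U (partial (w a) i)"
    using coframe_Ck[of a] by (simp add: numeral_3_eq_3 numeral_2_eq_2)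
  then show ?thesis using Ck_vec_nth[OF U] by blast
qed

lemma coframe_differentiable: "v \<in> U \<Longrightarrow> w a differentiable (at v)"
  using Ck_differentiable[OF coframe_Ck] by simp

lemma coframe_nth_differentiable: "v \<in> U \<Longrightarrow> (\<lambda>v. w a v $ i) differentiable (at v)"
  using Ck_differentiable[OF Ck_coframe] by simp

lemma coframe_partial_differentiable:
  "v \<in> U \<Longrightarrow> (\<lambda>v. partial (w a) i v $ j) differentiable (at v)"
  using Ck_differentiable[OF Ck_coframe_partial] by simp

lemma partial_metric:
  assumes v: "v \<in> U"
  shows "partial (\<lambda>v. g v $ i $ j) l v
     = (\<Sum>a\<in>UNIV. D a * (w a v $ i * partial (w a) l v $ j + partial (w a) l v $ i * w a v $ j))"
proof -
  have "partial (\<lambda>v. g v $ i $ j) l v = partial (\<lambda>v. \<Sum>a\<in>UNIV. D a * (w a v $ i * w a v $ j)) l v"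
    by (rule partial_cong_open[OF U v]) (simp add: metric_eq)
  also have "\<dots> = (\<Sum>a\<in>UNIV. partial (\<lambda>v. D a * (w a v $ i * w a v $ j)) l v)"
    by (rule partial_sum) (use coframe_nth_differentiable[OF v] in auto)
  also have "\<dots> = (\<Sum>a\<in>UNIV. D a * (w a v $ i * partial (w a) l v $ j + partial (w a) l v $ i * w a v $ j))"
    using coframe_nth_differentiable[OF v] coframe_differentiable[OF v]
    by (simp add: partial_cmult partial_mult partial_vec_nth)
  finally show ?thesis .
qed

text \<open>In matrix form \<open>g = W\<^sup>T D W\<close>, hence \<open>g\<^sup>-\<^sup>1 = W\<^sup>-\<^sup>1 D\<^sup>-\<^sup>1 W\<^sup>-\<^sup>T\<close>.\<close>

definition Dmat :: "real^3^3" where "Dmat = (\<chi> i j. if i = j then D i else 0)"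
definition Dmat_inv :: "real^3^3" where "Dmat_inv = (\<chi> i j. if i = j then 1 / D i else 0)"
definition Winv :: "real^3 \<Rightarrow> real^3^3" where "Winv v = matrix_inv (W v)"

lemma Dmat_inverse: "Dmat ** Dmat_inv = mat 1" "Dmat_inv ** Dmat = mat 1"
  by (simp_all add: vec_eq_iff forall_3 sum_3 matrix_matrix_mult_def mat_def Dmat_def Dmat_inv_def
      D_nonzero)

lemma W_Winv:
  assumes v: "v \<in> U"
  shows "W v ** Winv v = mat 1" "Winv v ** W v = mat 1"
proof -
  have "invertible (W v)"
    using det_coframe_nonzero[OF v] invertible_det_nz unfolding W_def by blast
  then obtain B where B: "W v ** B = mat 1" "B ** W v = mat 1" unfolding invertible_def by blast
  then have "Winv v = B" unfolding Winv_def by (intro matrix_inv_right_inverse)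
  then show "W v ** Winv v = mat 1" "Winv v ** W v = mat 1" using B by simp_all
qed

lemma matrix_inv_metric:
  assumes v: "v \<in> U"
  shows "matrix_inv (g v) = Winv v ** Dmat_inv ** transpose (Winv v)"
proof (rule matrix_inv_right_inverse)
  have g: "g v = transpose (W v) ** Dmat ** W v"
    unfolding metric_eq[OF v]
    by (simp add: vec_eq_iff matrix_matrix_mult_def transpose_def Dmat_def W_def if_distrib
        sum.delta' mult.assoc cong: if_cong) (auto intro!: sum.cong simp: mult_ac)
  have "g v ** (Winv v ** Dmat_inv ** transpose (Winv v))
      = transpose (W v) ** Dmat ** (W v ** Winv v) ** Dmat_inv ** transpose (Winv v)"
    unfolding g by (simp add: matrix_mul_assoc)
  also have "\<dots> = transpose (W v) ** transpose (Winv v)"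
    by (simp add: W_Winv[OF v] Dmat_inverse matrix_mul_assoc[symmetric])
  also have "\<dots> = transpose (Winv v ** W v)" by (simp add: matrix_transpose_mul)
  finally show "g v ** (Winv v ** Dmat_inv ** transpose (Winv v)) = mat 1"
    by (simp add: W_Winv[OF v])
qed

lemma koszul_coframe:
  assumes v: "v \<in> U"
  shows "1/2 * (partial (\<lambda>v. g v $ j $ l) i v + partial (\<lambda>v. g v $ i $ l) j v
                - partial (\<lambda>v. g v $ i $ j) l v)
     = (\<Sum>a\<in>UNIV. D a * w a v $ l * coframe_nabla a i j v)"
proof -
  have s: "\<And>a x y. partial (w a) y v $ x = partial (w a) x v $ y
              - (w (a+1) v $ x * w (a+2) v $ y - w (a+1) v $ y * w (a+2) v $ x)"
    using structure_eq[OF v] by (simp add: algebra_simps)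
  show ?thesis unfolding partial_metric[OF v] coframe_nabla_def connection_term_def
    by (rule koszul_coframe_identity[OF D_nonzero s s s])
qed

lemma christoffel_coframe:
  assumes v: "v \<in> U"
  shows "christoffel g k i j v = (\<Sum>a\<in>UNIV. Winv v $ k $ a * coframe_nabla a i j v)"
proof -
  define G where "G = (\<chi> a. coframe_nabla a i j v)"
  have "christoffel g k i j v = (\<Sum>l\<in>UNIV. matrix_inv (g v) $ k $ l *
      (1/2 * (partial (\<lambda>v. g v $ j $ l) i v + partial (\<lambda>v. g v $ i $ l) j v
              - partial (\<lambda>v. g v $ i $ j) l v)))"
    unfolding christoffel_def by (simp add: sum_distrib_left mult_ac)
  also have "\<dots> = (\<Sum>l\<in>UNIV. matrix_inv (g v) $ k $ l *
      (\<Sum>a\<in>UNIV. D a * w a v $ l * coframe_nabla a i j v))"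
    by (simp only: koszul_coframe[OF v])
  also have "\<dots> = (matrix_inv (g v) *v (transpose (W v) ** Dmat *v G)) $ k"
    by (simp add: matrix_vector_mult_def matrix_matrix_mult_def transpose_def Dmat_def W_def G_def
        if_distrib sum.delta' mult_ac cong: if_cong)
  also have "\<dots> = ((Winv v ** Dmat_inv ** (transpose (W v ** Winv v)) ** Dmat) *v G) $ k"
    by (simp add: matrix_inv_metric[OF v] matrix_vector_mul_assoc matrix_mul_assoc
        matrix_transpose_mul)
  also have "\<dots> = (Winv v *v G) $ k"
    by (simp add: W_Winv[OF v] matrix_mul_assoc[symmetric] Dmat_inverse)
  finally show ?thesis by (simp add: matrix_vector_mult_def G_def)
qed

lemma coframe_christoffel:
  assumes v: "v \<in> U"
  shows "(\<Sum>n\<in>UNIV. w a v $ n * christoffel g n j k v) = coframe_nabla a j k v"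
proof -
  have "(\<Sum>n\<in>UNIV. w a v $ n * christoffel g n j k v)
      = (W v *v (Winv v *v (\<chi> a. coframe_nabla a j k v))) $ a"
    by (simp add: christoffel_coframe[OF v] matrix_vector_mult_def W_def)
  then show ?thesis by (simp add: matrix_vector_mul_assoc W_Winv[OF v])
qed

text \<open>Regularity: the Christoffel symbols are \<open>C\<^sup>2\<close>, so the Riemann tensor may be
  differentiated term by term.\<close>

lemmas Ck_coframe_intros = Ck_add[OF U] Ck_diff[OF U] Ck_mult[OF U] Ck_const Ck_coframe

(* The inverse coframe matrix is C^3, by the adjugate formula. *)
lemma Ck_Winv: "Ck 3 U (\<lambda>v. Winv v $ k $ a)"
proof -
  have "Ck 3 U (\<lambda>v. inverse (det (W v)) * adjugate3 (W v) $ k $ a)"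
    unfolding W_def adjugate3_def det_3
    by (simp, intro Ck_coframe_intros Ck_inverse[OF U])
       (use det_coframe_nonzero in \<open>simp add: det_3\<close>)
  moreover have "Winv v $ k $ a = inverse (det (W v)) * adjugate3 (W v) $ k $ a" if "v \<in> U" for v
    unfolding Winv_def using matrix_inv_adjugate3[OF det_coframe_nonzero[OF that]]
    by (simp add: W_def divide_inverse)
  ultimately show ?thesis
    using Ck_cong_open[OF U, of "\<lambda>v. Winv v $ k $ a"
        "\<lambda>v. inverse (det (W v)) * adjugate3 (W v) $ k $ a" 3] by simp
qed

lemma Ck_connection_term: "Ck 3 U (\<lambda>v. connection_term a i j v)"
  unfolding connection_term_def by (intro Ck_sum[OF U] Ck_coframe_intros) auto

lemma Ck_christoffel: "Ck 2 U (\<lambda>v. christoffel g k i j v)"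
proof -
  have "Ck 2 U (\<lambda>v. \<Sum>a\<in>UNIV. Winv v $ k $ a * coframe_nabla a i j v)"
    unfolding coframe_nabla_def
    by (intro Ck_sum[OF U] Ck_coframe_intros Ck_coframe_partial Ck_mono[OF Ck_Winv]
        Ck_mono[OF Ck_connection_term]) auto
  then show ?thesis
    using Ck_cong_open[OF U, of "\<lambda>v. christoffel g k i j v"
        "\<lambda>v. \<Sum>a\<in>UNIV. Winv v $ k $ a * coframe_nabla a i j v" 2] christoffel_coframe by simp
qed

lemma christoffel_differentiable: "v \<in> U \<Longrightarrow> (\<lambda>v. christoffel g k i j v) differentiable (at v)"
  using Ck_differentiable[OF Ck_christoffel] by simp

lemma coframe_partial_christoffel:
  "(\<Sum>n\<in>UNIV. w a u0 $ n * partial (\<lambda>v. christoffel g n j k v) i u0)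
     = partial (\<lambda>v. coframe_nabla a j k v) i u0
       - (\<Sum>n\<in>UNIV. partial (w a) i u0 $ n * christoffel g n j k u0)"
proof -
  have "partial (\<lambda>v. coframe_nabla a j k v) i u0
      = partial (\<lambda>v. \<Sum>n\<in>UNIV. w a v $ n * christoffel g n j k v) i u0"
    by (rule partial_cong_open[OF U u0]) (simp add: coframe_christoffel)
  also have "\<dots> = (\<Sum>n\<in>UNIV. partial (\<lambda>v. w a v $ n * christoffel g n j k v) i u0)"
    by (rule partial_sum)
       (use coframe_nth_differentiable[OF u0] christoffel_differentiable[OF u0] in auto)
  also have "\<dots> = (\<Sum>n\<in>UNIV. w a u0 $ n * partial (\<lambda>v. christoffel g n j k v) i u0
                    + partial (w a) i u0 $ n * christoffel g n j k u0)"
    by (simp add: partial_mult coframe_nth_differentiable[OF u0] christoffel_differentiable[OF u0]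
        partial_vec_nth coframe_differentiable[OF u0])
  finally show ?thesis by (simp add: sum.distrib)
qed

(* Derivative of w_a(\<nabla>_{\<partial>_j} \<partial>_k): the frame connection is constant. *)
lemma partial_coframe_nabla:
  "partial (\<lambda>v. coframe_nabla a j k v) i u0 = partial (\<lambda>v. partial (w a) j v $ k) i u0
     + (\<Sum>p\<in>UNIV. \<Sum>q\<in>UNIV. frame_connection D a p q *
          (w p u0 $ j * partial (w q) i u0 $ k + partial (w p) i u0 $ j * w q u0 $ k))"
proof -
  have "partial (\<lambda>v. connection_term a j k v) i u0
      = (\<Sum>p\<in>UNIV. \<Sum>q\<in>UNIV. partial (\<lambda>v. frame_connection D a p q * (w p v $ j * w q v $ k)) i u0)"
    unfolding connection_term_def
    using coframe_nth_differentiable[OF u0] by (simp add: partial_sum)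
  also have "\<dots> = (\<Sum>p\<in>UNIV. \<Sum>q\<in>UNIV. frame_connection D a p q *
          (w p u0 $ j * partial (w q) i u0 $ k + partial (w p) i u0 $ j * w q u0 $ k))"
    by (simp add: partial_cmult partial_mult coframe_nth_differentiable[OF u0] partial_vec_nth
        coframe_differentiable[OF u0])
  moreover have "(\<lambda>v. connection_term a j k v) differentiable (at u0)"
    using Ck_differentiable[OF Ck_connection_term] u0 by simp
  ultimately show ?thesis
    unfolding coframe_nabla_def by (simp add: partial_add coframe_partial_differentiable[OF u0])
qed

lemma coframe_partial_commute:
  "partial (\<lambda>v. partial (w a) j v $ k) i u0 = partial (\<lambda>v. partial (w a) i v $ k) j u0"
proof -
  have "partial (w a) l differentiable (at u0)" for l
    using coframe_Ck[of a] u0 by (simp add: numeral_3_eq_3)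
  then have "partial (\<lambda>v. partial (w a) l v $ k) l' u0 = partial (partial (w a) l) l' u0 $ k" for l l'
    by (simp add: partial_vec_nth)
  then show ?thesis
    using partial_commute[OF U u0 Ck_mono[OF coframe_Ck, of 2 a]] by simp
qed

lemma riemann_coframe:
  "(\<Sum>n\<in>UNIV. w a u0 $ n * riemann g n i j k u0)
     = (\<Sum>x\<in>UNIV. \<Sum>y\<in>UNIV. \<Sum>z\<in>UNIV. frame_riemann (frame_connection D) a x y z *
          (w x u0 $ i * w y u0 $ j * w z u0 $ k))"
proof -
  let ?C = "\<lambda>n j k. christoffel g n j k u0"
  let ?L = "frame_connection D"
  have "(\<Sum>n\<in>UNIV. w a u0 $ n * riemann g n i j k u0)
     = (\<Sum>n\<in>UNIV. w a u0 $ n * partial (\<lambda>v. christoffel g n j k v) i u0)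
     - (\<Sum>n\<in>UNIV. w a u0 $ n * partial (\<lambda>v. christoffel g n i k v) j u0)
     + (\<Sum>m\<in>UNIV. ?C m j k * (\<Sum>n\<in>UNIV. w a u0 $ n * ?C n i m))
     - (\<Sum>m\<in>UNIV. ?C m i k * (\<Sum>n\<in>UNIV. w a u0 $ n * ?C n j m))"
    unfolding riemann_def by (simp add: sum_3 algebra_simps)
  also have "\<dots> = partial (\<lambda>v. coframe_nabla a j k v) i u0 - partial (\<lambda>v. coframe_nabla a i k v) j u0
     + (\<Sum>q\<in>UNIV. (\<Sum>p\<in>UNIV. ?L a p q * w p u0 $ i) * coframe_nabla q j k u0)
     - (\<Sum>q\<in>UNIV. (\<Sum>p\<in>UNIV. ?L a p q * w p u0 $ j) * coframe_nabla q i k u0)"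
    unfolding coframe_partial_christoffel coframe_christoffel[OF u0]
      coframe_nabla_def[of a i] coframe_nabla_def[of a j] connection_term_def sum3_regroup
    by (simp add: coframe_christoffel[OF u0] mult.commute)
  also have "\<dots> = (\<Sum>x\<in>UNIV. \<Sum>y\<in>UNIV. \<Sum>z\<in>UNIV. frame_riemann ?L a x y z *
          (w x u0 $ i * w y u0 $ j * w z u0 $ k))"
  proof -
    have s: "\<And>p. partial (w p) j u0 $ i = partial (w p) i u0 $ j
                 - (w (p+1) u0 $ i * w (p+2) u0 $ j - w (p+1) u0 $ j * w (p+2) u0 $ i)"
      using structure_eq[OF u0] by (simp add: algebra_simps)
    show ?thesis
      unfolding partial_coframe_nabla unfolding coframe_nabla_def connection_term_def
      by (rule riemann_coframe_identity[OF coframe_partial_commute[symmetric] s])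
  qed
  finally show ?thesis .
qed

end

lemma sum3_contract:
  fixes T :: "3 \<Rightarrow> 3 \<Rightarrow> 3 \<Rightarrow> real" and W :: "3 \<Rightarrow> 3 \<Rightarrow> real" and x y z :: "3 \<Rightarrow> real"
  shows "(\<Sum>i\<in>UNIV. \<Sum>j\<in>UNIV. \<Sum>k\<in>UNIV. x i * y j * z k *
            (\<Sum>p\<in>UNIV. \<Sum>q\<in>UNIV. \<Sum>r\<in>UNIV. T p q r * (W p i * W q j * W r k)))
       = (\<Sum>p\<in>UNIV. \<Sum>q\<in>UNIV. \<Sum>r\<in>UNIV. T p q r * (\<Sum>i\<in>UNIV. W p i * x i)
            * (\<Sum>j\<in>UNIV. W q j * y j) * (\<Sum>k\<in>UNIV. W r k * z k))"
  unfolding sum_3 by algebra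

lemma sum3_pull_out:
  fixes c :: "3 \<Rightarrow> real" and F :: "3 \<Rightarrow> 3 \<Rightarrow> 3 \<Rightarrow> 3 \<Rightarrow> real" and x y z :: "3 \<Rightarrow> real"
  shows "(\<Sum>i\<in>UNIV. \<Sum>j\<in>UNIV. \<Sum>k\<in>UNIV. x i * y j * z k * (\<Sum>b\<in>UNIV. c b * F b i j k))
    = (\<Sum>b\<in>UNIV. c b * (\<Sum>i\<in>UNIV. \<Sum>j\<in>UNIV. \<Sum>k\<in>UNIV. x i * y j * z k * F b i j k))"
  unfolding sum_3 by algebra

lemma sum3_metric_contract:
  fixes x R D :: "3 \<Rightarrow> real" and W :: "3 \<Rightarrow> 3 \<Rightarrow> real" and c :: real
  shows "(\<Sum>l\<in>UNIV. \<Sum>n\<in>UNIV. c * x l * R n * (\<Sum>b\<in>UNIV. D b * (W b n * W b l)))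
     = c * (\<Sum>b\<in>UNIV. D b * (\<Sum>l\<in>UNIV. W b l * x l) * (\<Sum>n\<in>UNIV. W b n * R n))"
  unfolding sum_3 by algebra

context const_structure_coframe
begin

lemma gform_coframe: "gform g u0 x y = (\<Sum>b\<in>UNIV. D b * (w b u0 \<bullet> x) * (w b u0 \<bullet> y))"
  unfolding gform_def metric_eq[OF u0] inner_vec_def sum_3 by (simp add: algebra_simps)

lemma curvature_numerator_coframe:
  "(\<Sum>i\<in>UNIV. \<Sum>j\<in>UNIV. \<Sum>k\<in>UNIV. \<Sum>l\<in>UNIV. \<Sum>n\<in>UNIV.
        x $ i * y $ j * y $ k * x $ l * riemann g n i j k u0 * g u0 $ n $ l)
   = (\<Sum>b\<in>UNIV. D b * (w b u0 \<bullet> x) *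
        (\<Sum>p\<in>UNIV. \<Sum>q\<in>UNIV. \<Sum>r\<in>UNIV. frame_riemann (frame_connection D) b p q r
            * (w p u0 \<bullet> x) * (w q u0 \<bullet> y) * (w r u0 \<bullet> y)))"
proof -
  let ?T = "frame_riemann (frame_connection D)"
  have inner: "w b u0 \<bullet> z = (\<Sum>i\<in>UNIV. w b u0 $ i * z $ i)" for b z
    by (simp add: inner_vec_def)
  have "(\<Sum>l\<in>UNIV. \<Sum>n\<in>UNIV. x $ i * y $ j * y $ k * x $ l * riemann g n i j k u0 * g u0 $ n $ l)
      = x $ i * y $ j * y $ k *
          (\<Sum>b\<in>UNIV. D b * (w b u0 \<bullet> x) * (\<Sum>n\<in>UNIV. w b u0 $ n * riemann g n i j k u0))"
    for i j k
    unfolding metric_eq[OF u0] inner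
    using sum3_metric_contract[of "x $ i * y $ j * y $ k" "\<lambda>l. x $ l" "\<lambda>n. riemann g n i j k u0"
        D "\<lambda>b i. w b u0 $ i"]
    by (simp add: mult_ac)
  then have "(\<Sum>i\<in>UNIV. \<Sum>j\<in>UNIV. \<Sum>k\<in>UNIV. \<Sum>l\<in>UNIV. \<Sum>n\<in>UNIV.
        x $ i * y $ j * y $ k * x $ l * riemann g n i j k u0 * g u0 $ n $ l)
     = (\<Sum>i\<in>UNIV. \<Sum>j\<in>UNIV. \<Sum>k\<in>UNIV. x $ i * y $ j * y $ k *
          (\<Sum>b\<in>UNIV. D b * (w b u0 \<bullet> x) * (\<Sum>p\<in>UNIV. \<Sum>q\<in>UNIV. \<Sum>r\<in>UNIV.
              ?T b p q r * (w p u0 $ i * w q u0 $ j * w r u0 $ k))))"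
    by (simp only: riemann_coframe)
  also have "\<dots> = (\<Sum>b\<in>UNIV. D b * (w b u0 \<bullet> x) *
          (\<Sum>i\<in>UNIV. \<Sum>j\<in>UNIV. \<Sum>k\<in>UNIV. x $ i * y $ j * y $ k *
            (\<Sum>p\<in>UNIV. \<Sum>q\<in>UNIV. \<Sum>r\<in>UNIV. ?T b p q r * (w p u0 $ i * w q u0 $ j * w r u0 $ k))))"
    by (rule sum3_pull_out)
  also have "\<dots> = (\<Sum>b\<in>UNIV. D b * (w b u0 \<bullet> x) *
        (\<Sum>p\<in>UNIV. \<Sum>q\<in>UNIV. \<Sum>r\<in>UNIV. ?T b p q r * (w p u0 \<bullet> x) * (w q u0 \<bullet> y) * (w r u0 \<bullet> y)))"
    unfolding inner by (simp only: sum3_contract)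
  finally show ?thesis .
qed

lemma sectional_curvature_frame_plane:
  assumes "p \<noteq> q" "\<alpha> \<noteq> 0" "\<beta> \<noteq> 0"
    and x: "\<And>a. w a u0 \<bullet> x = (if a = p then \<alpha> else 0)"
    and y: "\<And>a. w a u0 \<bullet> y = (if a = q then \<beta> else 0)"
  shows "sectional_curvature g u0 x y = frame_riemann (frame_connection D) p p q q / D q"
proof -
  have "gform g u0 x x = D p * \<alpha>\<^sup>2" "gform g u0 y y = D q * \<beta>\<^sup>2"
    unfolding gform_coframe x y by (simp_all add: if_distrib power2_eq_square cong: if_cong)
  moreover have "gform g u0 x y = 0"
    unfolding gform_coframe x y using \<open>p \<noteq> q\<close> by (intro sum.neutral) auto
  moreover have "(\<Sum>b\<in>UNIV. D b * (if b = p then \<alpha> else 0) *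
        (\<Sum>p'\<in>UNIV. \<Sum>q'\<in>UNIV. \<Sum>r\<in>UNIV. frame_riemann (frame_connection D) b p' q' r
           * (if p' = p then \<alpha> else 0) * (if q' = q then \<beta> else 0) * (if r = q then \<beta> else 0)))
      = D p * \<alpha>\<^sup>2 * \<beta>\<^sup>2 * frame_riemann (frame_connection D) p p q q"
    using exhaust_3[of p] exhaust_3[of q] \<open>p \<noteq> q\<close>
    by (auto simp: sum_3 mod3_simps power2_eq_square)
  ultimately show ?thesis
    unfolding sectional_curvature_def curvature_numerator_coframe x y
    using assms(2,3) D_nonzero[of p] D_nonzero[of q] by (simp add: field_simps)
qed

end

section \<open>Lifts and the generalized Cheeger--Gromoll metric\<close>

lemma inner_self_sphere:
  fixes p :: "real^3"
  assumes "c > 0" "norm p = 1 / sqrt c"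
  shows "p \<bullet> p = 1 / c"
  using assms by (simp add: power2_norm_eq_inner[symmetric] power_divide)

text \<open>Parallel transport along the great circle through \<open>p\<close> in direction \<open>X\<close> is explicit;
  it shows that horizontal lifts exist, and their value is \<open>(X, -c\<langle>e,X\<rangle> p)\<close>.\<close>

lemma great_circle:
  fixes p X :: "real^3"
  assumes c: "c > 0" and pp: "p \<bullet> p = 1 / c" and Xp: "X \<bullet> p = 0" and X: "X \<noteq> 0"
  defines "k \<equiv> sqrt c * norm X"
  defines "\<gamma> \<equiv> \<lambda>t. cos (k*t) *\<^sub>R p + (sin (k*t) / k) *\<^sub>R X"
  shows "\<gamma> t \<bullet> \<gamma> t = 1 / c"
    and "(\<gamma> has_vector_derivative ((- (k * sin (k*t))) *\<^sub>R p + cos (k*t) *\<^sub>R X)) (at t)"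
proof -
  have k: "k > 0" and kk: "k * k = c * (X \<bullet> X)"
    using c X by (simp_all add: k_def dot_square_norm power2_eq_square)
  have "\<gamma> t \<bullet> \<gamma> t = (cos (k*t))\<^sup>2 * (p \<bullet> p) + (sin (k*t) / k)\<^sup>2 * (X \<bullet> X)"
    unfolding \<gamma>_def using Xp
    by (simp add: inner_commute power2_eq_square algebra_simps)
  also have "\<dots> = 1 / c"
  proof -
    have "(sin (k*t) / k)\<^sup>2 * (X \<bullet> X) = (sin (k*t))\<^sup>2 / c"
      using kk k c X by (simp add: power2_eq_square field_simps)
    then show ?thesis unfolding pp by (simp add: add_divide_distrib[symmetric])
  qed
  finally show "\<gamma> t \<bullet> \<gamma> t = 1 / c" .
  show "(\<gamma> has_vector_derivative ((- (k * sin (k*t))) *\<^sub>R p + cos (k*t) *\<^sub>R X)) (at t)"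
    unfolding \<gamma>_def using k by (auto intro!: derivative_eq_intros simp: field_simps)
qed

lemma parallel_field_along_great_circle:
  fixes p e X :: "real^3"
  assumes c: "c > 0" and pp: "p \<bullet> p = 1 / c" and Xp: "X \<bullet> p = 0" and X: "X \<noteq> 0"
    and ep: "e \<bullet> p = 0"
  defines "k \<equiv> sqrt c * norm X"
  defines "\<gamma> \<equiv> \<lambda>t. cos (k*t) *\<^sub>R p + (sin (k*t) / k) *\<^sub>R X"
  defines "V \<equiv> \<lambda>t. e + ((e \<bullet> X) / (X \<bullet> X) * (cos (k*t) - 1)) *\<^sub>R X
                    - ((e \<bullet> X) * c / k * sin (k*t)) *\<^sub>R p"
  shows "V t \<bullet> \<gamma> t = 0"
    and "(V has_vector_derivative (- (c * (e \<bullet> X))) *\<^sub>R \<gamma> t) (at t)"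
proof -
  have k: "k > 0" and kk: "k * k = c * (X \<bullet> X)"
    using c X by (simp_all add: k_def dot_square_norm power2_eq_square)
  have XX: "X \<bullet> X > 0" using X by simp
  have "V t \<bullet> \<gamma> t = (sin (k*t) / k) * (e \<bullet> X)
      + (e \<bullet> X) / (X \<bullet> X) * (cos (k*t) - 1) * (sin (k*t) / k) * (X \<bullet> X)
      - (e \<bullet> X) * c / k * sin (k*t) * cos (k*t) * (p \<bullet> p)"
    unfolding V_def \<gamma>_def using Xp ep
    by (simp add: inner_commute algebra_simps)
  also have "\<dots> = 0" using XX k c X unfolding pp by (simp add: field_simps)
  finally show "V t \<bullet> \<gamma> t = 0" .
  have "(V has_vector_derivative (- ((e \<bullet> X) / (X \<bullet> X) * k * sin (k*t))) *\<^sub>R X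
           - ((e \<bullet> X) * c / k * k * cos (k*t)) *\<^sub>R p) (at t)"
    unfolding V_def using k X by (auto intro!: derivative_eq_intros simp: field_simps)
  moreover have "(- ((e \<bullet> X) / (X \<bullet> X) * k * sin (k*t))) *\<^sub>R X
           - ((e \<bullet> X) * c / k * k * cos (k*t)) *\<^sub>R p = (- (c * (e \<bullet> X))) *\<^sub>R \<gamma> t"
  proof -
    have "(e \<bullet> X) / (X \<bullet> X) * k = c * (e \<bullet> X) / k"
      using kk k XX by (simp add: field_simps)
    then show ?thesis
      unfolding \<gamma>_def using k by (simp add: algebra_simps)
  qed
  ultimately show "(V has_vector_derivative (- (c * (e \<bullet> X))) *\<^sub>R \<gamma> t) (at t)" by simp
qed

lemma is_hlift_exists:
  assumes c: "c > 0" and p: "norm p = 1 / sqrt c" and ep: "e \<bullet> p = 0" and Xp: "X \<bullet> p = 0"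
  shows "is_hlift c p e X (X, (- (c * (e \<bullet> X))) *\<^sub>R p)"
proof (cases "X = 0")
  case True
  have "parallel_along (\<lambda>t. p) (\<lambda>t. e)"
    unfolding parallel_along_def tproj_def using ep
    by auto
  moreover have "((\<lambda>t. (p, e)) has_vector_derivative (X, (- (c * (e \<bullet> X))) *\<^sub>R p)) (at 0)"
    using True by (simp add: zero_prod_def[symmetric])
  ultimately show ?thesis
    unfolding is_hlift_def sphere2_def using p True
    by (intro exI[of _ "\<lambda>t. p"] exI[of _ "\<lambda>t. e"]) auto
next
  case False
  have pp: "p \<bullet> p = 1 / c" using inner_self_sphere[OF c p] .
  define k where "k = sqrt c * norm X"
  define \<gamma> where "\<gamma> t = cos (k*t) *\<^sub>R p + (sin (k*t) / k) *\<^sub>R X" for t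
  define V where "V t = e + ((e \<bullet> X) / (X \<bullet> X) * (cos (k*t) - 1)) *\<^sub>R X
                    - ((e \<bullet> X) * c / k * sin (k*t)) *\<^sub>R p" for t
  note circle = great_circle[OF c pp Xp False, folded k_def, folded \<gamma>_def]
  note field = parallel_field_along_great_circle[OF c pp Xp False ep,
      folded k_def, folded \<gamma>_def, folded V_def]
  have on_sphere: "\<gamma> t \<in> sphere2 c" for t
    using circle(1)[of t] c
    by (simp add: sphere2_def norm_eq_sqrt_inner real_sqrt_divide)
  have "tproj (\<gamma> t) (vector_derivative V (at t)) = 0" for t
  proof -
    have "vector_derivative V (at t) = (- (c * (e \<bullet> X))) *\<^sub>R \<gamma> t"
      using field(2) by (rule vector_derivative_at)
    then show ?thesis unfolding tproj_def using circle(1)[of t] c by simp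
  qed
  then have "parallel_along \<gamma> V"
    unfolding parallel_along_def using field by (auto intro: differentiableI_vector)
  moreover have "((\<lambda>t. (\<gamma> t, V t)) has_vector_derivative (X, (- (c * (e \<bullet> X))) *\<^sub>R p)) (at 0)"
    using has_vector_derivative_Pair[OF circle(2) field(2), of 0] by (simp add: \<gamma>_def)
  moreover have "(\<gamma> has_vector_derivative X) (at 0)" using circle(2)[of 0] by simp
  moreover have "\<gamma> differentiable (at t)" for t
    using circle(2) by (rule differentiableI_vector)
  moreover have "\<gamma> 0 = p" "V 0 = e" by (simp_all add: \<gamma>_def V_def)
  ultimately show ?thesis
    unfolding is_hlift_def using on_sphere by (intro exI[of _ \<gamma>] exI[of _ V]) simp
qed

(* Any horizontal lift has this value: parallel fields have normal derivative, and
   differentiating V \<bullet> \<gamma> = 0 fixes its normal component. *)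
lemma is_hlift_unique:
  assumes c: "c > 0" and p: "norm p = 1 / sqrt c" and H: "is_hlift c p e X W"
  shows "W = (X, (- (c * (e \<bullet> X))) *\<^sub>R p)"
proof -
  obtain \<gamma> V where g: "\<gamma> 0 = p" "(\<gamma> has_vector_derivative X) (at 0)" "V 0 = e"
      "parallel_along \<gamma> V" "((\<lambda>t. (\<gamma> t, V t)) has_vector_derivative W) (at 0)"
    using H unfolding is_hlift_def by blast
  define Y where "Y = vector_derivative V (at 0)"
  have Vd: "(V has_vector_derivative Y) (at 0)"
    using g(4) unfolding parallel_along_def Y_def by (simp add: vector_derivative_works[symmetric])
  have tp: "tproj p Y = 0" using g(4) g(1) unfolding parallel_along_def Y_def by metis
  have "((\<lambda>t. (\<gamma> t, V t)) has_vector_derivative (X, Y)) (at 0)"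
    by (rule has_vector_derivative_Pair[OF g(2) Vd])
  then have W: "W = (X, Y)" using g(5) vector_derivative_unique_at by blast
  have "((\<lambda>t. V t \<bullet> \<gamma> t) has_derivative (\<lambda>h. V 0 \<bullet> (h *\<^sub>R X) + (h *\<^sub>R Y) \<bullet> \<gamma> 0)) (at 0)"
    using bounded_bilinear.FDERIV[OF bounded_bilinear_inner Vd[unfolded has_vector_derivative_def]
        g(2)[unfolded has_vector_derivative_def]] .
  moreover have "((\<lambda>t. V t \<bullet> \<gamma> t) has_derivative (\<lambda>h. 0)) (at 0)"
    using g(4) unfolding parallel_along_def by simp
  ultimately have "(\<lambda>h. V 0 \<bullet> (h *\<^sub>R X) + (h *\<^sub>R Y) \<bullet> \<gamma> 0) = (\<lambda>h::real. 0)"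
    by (rule has_derivative_unique)
  from fun_cong[OF this, of 1] have "Y \<bullet> p = - (e \<bullet> X)" using g(1,3) by simp
  moreover have "Y = ((Y \<bullet> p) / (p \<bullet> p)) *\<^sub>R p" using tp unfolding tproj_def by simp
  ultimately have "Y = (- (c * (e \<bullet> X))) *\<^sub>R p"
    using inner_self_sphere[OF c p] c by simp
  then show ?thesis using W by simp
qed

lemma hlift_eq:
  assumes c: "c > 0" and p: "norm p = 1 / sqrt c" and ep: "e \<bullet> p = 0" and Xp: "X \<bullet> p = 0"
  shows "hlift c p e X = (X, (- (c * (e \<bullet> X))) *\<^sub>R p)"
  unfolding hlift_def
  using is_hlift_exists[OF assms] is_hlift_unique[OF c p] by (rule the_equality)

lemma vlift_eq: "vlift p e Y = (0, Y)"
proof -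
  have "((\<lambda>t. (p, e + t *\<^sub>R Y)) has_vector_derivative (0, Y)) (at 0)"
    by (auto intro!: derivative_eq_intros)
  then show ?thesis unfolding vlift_def by (rule vector_derivative_at)
qed

text \<open>A vector \<open>\<xi>\<close> tangent to \<open>T\<^sup>1\<bbbS>\<^sup>2(c)\<close> at \<open>(p, e)\<close> (the two tangency equations) splits
  uniquely as \<open>X\<^sup>h + Y\<^sup>v\<close> with \<open>X = fst \<xi>\<close> and \<open>Y = snd \<xi> + c\<langle>e,X\<rangle> p\<close>.\<close>

lemma lift_coords_eq:
  assumes c: "c > 0" and p: "norm p = 1 / sqrt c" and ep: "e \<bullet> p = 0"
    and t1: "fst \<xi> \<bullet> p = 0" and t2: "snd \<xi> \<bullet> p + e \<bullet> fst \<xi> = 0"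
  shows "lift_coords c p e \<xi> = (fst \<xi>, snd \<xi> + (c * (e \<bullet> fst \<xi>)) *\<^sub>R p)"
  unfolding lift_coords_def
proof (rule the_equality)
  have "(snd \<xi> + (c * (e \<bullet> fst \<xi>)) *\<^sub>R p) \<bullet> p = 0"
    using t2 c by (simp add: inner_add_left inner_self_sphere[OF c p])
  then show "case (fst \<xi>, snd \<xi> + (c * (e \<bullet> fst \<xi>)) *\<^sub>R p) of (X, Y) \<Rightarrow>
      X \<bullet> p = 0 \<and> Y \<bullet> p = 0 \<and> \<xi> = hlift c p e X + vlift p e Y"
    using t1 by (simp add: hlift_eq[OF c p ep t1] vlift_eq prod_eq_iff)
next
  fix z
  assume "case z of (X, Y) \<Rightarrow> X \<bullet> p = 0 \<and> Y \<bullet> p = 0 \<and> \<xi> = hlift c p e X + vlift p e Y"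
  then show "z = (fst \<xi>, snd \<xi> + (c * (e \<bullet> fst \<xi>)) *\<^sub>R p)"
    by (cases z) (auto simp: hlift_eq[OF c p ep] vlift_eq algebra_simps)
qed

lemma hCG_eq:
  assumes c: "c > 0" and p: "norm p = 1 / sqrt c" and ep: "e \<bullet> p = 0"
    and t1: "fst \<xi> \<bullet> p = 0" and t2: "snd \<xi> \<bullet> p + e \<bullet> fst \<xi> = 0"
    and s1: "fst \<eta> \<bullet> p = 0" and s2: "snd \<eta> \<bullet> p + e \<bullet> fst \<eta> = 0"
  shows "hCG c m r (p, e) \<xi> \<eta> =
     (let \<omega> = 1 / (1 + (norm e)\<^sup>2); Y = snd \<xi> + (c * (e \<bullet> fst \<xi>)) *\<^sub>R p;
          Y' = snd \<eta> + (c * (e \<bullet> fst \<eta>)) *\<^sub>R p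
      in fst \<xi> \<bullet> fst \<eta> + \<omega> powr m * (Y \<bullet> Y' + r * (Y \<bullet> e) * (Y' \<bullet> e)))"
  unfolding hCG_def using lift_coords_eq[OF c p ep t1 t2] lift_coords_eq[OF c p ep s1 s2]
  by (simp add: Let_def)

section \<open>The coframe of a chart of the unit tangent bundle\<close>

lemma orthonormal_frame_expansion:
  fixes E :: "3 \<Rightarrow> real^3"
  assumes on: "\<And>a b. E a \<bullet> E b = (if a = b then 1 else 0)"
  shows "x \<bullet> y = (\<Sum>c\<in>UNIV. (x \<bullet> E c) * (y \<bullet> E c))"
proof -
  define M :: "real^3^3" where "M = (\<chi> a i. E a $ i)"
  have "M ** transpose M = mat 1"
    using on by (simp add: M_def matrix_matrix_mult_def transpose_def mat_def vec_eq_iff inner_vec_def)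
  then have MM: "transpose M ** M = mat 1" using matrix_left_right_inverse by blast
  have "(\<Sum>c\<in>UNIV. (x \<bullet> E c) * (y \<bullet> E c))
      = (\<Sum>i\<in>UNIV. \<Sum>j\<in>UNIV. x $ i * y $ j * (transpose M ** M) $ i $ j)"
    unfolding M_def inner_vec_def matrix_matrix_mult_def transpose_def sum_3 by simp algebra
  also have "\<dots> = x \<bullet> y"
    unfolding MM by (simp add: mat_def inner_vec_def if_distrib sum.delta cong: if_cong)
  finally show ?thesis by simp
qed

locale chart =
  fixes c :: real and \<phi> :: "real^3 \<Rightarrow> (real^3) \<times> (real^3)" and U :: "(real^3) set"
  assumes c: "c > 0" and U: "open U" and smooth: "smooth_on3 U \<phi>" and img: "\<phi> ` U \<subseteq> T1S2 c"
begin

definition P :: "real^3 \<Rightarrow> real^3" where "P v = fst (\<phi> v)"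
definition V :: "real^3 \<Rightarrow> real^3" where "V v = snd (\<phi> v)"

definition orth_frame :: "3 \<Rightarrow> real^3 \<Rightarrow> real^3" where
  "orth_frame a v = (if a = 1 then sqrt c *\<^sub>R P v else if a = 2 then V v
                     else sqrt c *\<^sub>R cross3 (P v) (V v))"

definition connection_form :: "3 \<Rightarrow> 3 \<Rightarrow> 3 \<Rightarrow> real^3 \<Rightarrow> real" where
  "connection_form a b i v = orth_frame a v \<bullet> partial (orth_frame b) i v"

lemma phi_PV: "\<phi> v = (P v, V v)"
  by (simp add: P_def V_def)

lemma Ck_phi: "Ck k U \<phi>"
  using smooth unfolding smooth_on3_def by blast

lemma Ck_P: "Ck k U P"
  unfolding P_def using Ck_linear[OF bounded_linear_fst U Ck_phi] .

lemma Ck_V: "Ck k U V"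
  unfolding V_def using Ck_linear[OF bounded_linear_snd U Ck_phi] .

lemma Ck_orth_frame: "Ck k U (orth_frame a)"
proof -
  have "Ck k U (\<lambda>v. sqrt c *\<^sub>R P v)" "Ck k U (\<lambda>v. sqrt c *\<^sub>R cross3 (P v) (V v))"
    by (intro Ck_scaleR[OF U] Ck_const Ck_cross[OF U] Ck_P Ck_V)+
  then show ?thesis unfolding orth_frame_def using Ck_V[of k]
    by (cases "a = 1"; cases "a = 2"; simp)
qed

lemma P_differentiable: "v \<in> U \<Longrightarrow> P differentiable (at v)"
  using Ck_differentiable[OF Ck_P[of 1]] by simp

lemma V_differentiable: "v \<in> U \<Longrightarrow> V differentiable (at v)"
  using Ck_differentiable[OF Ck_V[of 1]] by simp

lemma orth_frame_differentiable: "v \<in> U \<Longrightarrow> orth_frame a differentiable (at v)"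
  using Ck_differentiable[OF Ck_orth_frame[of 1]] by simp

lemma chart_point:
  assumes "v \<in> U"
  shows "norm (P v) = 1 / sqrt c" "V v \<bullet> P v = 0" "norm (V v) = 1"
  using img assms unfolding T1S2_def TS2_def sphere2_def P_def V_def
  by (auto simp: case_prod_beta split: prod.splits)

lemma P_inner_P: "v \<in> U \<Longrightarrow> P v \<bullet> P v = 1 / c"
  using inner_self_sphere[OF c chart_point(1)] .

lemma V_inner_V: "v \<in> U \<Longrightarrow> V v \<bullet> V v = 1"
  using chart_point(3) by (simp add: dot_square_norm)

lemma orth_frame_orthonormal:
  assumes v: "v \<in> U"
  shows "orth_frame a v \<bullet> orth_frame b v = (if a = b then 1 else 0)"
proof -
  have PV: "P v \<bullet> V v = 0" using chart_point(2)[OF v] by (simp add: inner_commute)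
  have "(norm (cross3 (P v) (V v)))\<^sup>2 + (P v \<bullet> V v)\<^sup>2 = (norm (P v) * norm (V v))\<^sup>2"
    by (rule norm_cross_dot)
  then have "cross3 (P v) (V v) \<bullet> cross3 (P v) (V v) = 1 / c"
    using chart_point[OF v] PV c by (simp add: power_divide dot_square_norm)
  moreover have "P v \<bullet> cross3 (P v) (V v) = 0" "V v \<bullet> cross3 (P v) (V v) = 0"
    "cross3 (P v) (V v) \<bullet> P v = 0" "cross3 (P v) (V v) \<bullet> V v = 0"
    using dot_cross_self by (auto simp: inner_commute)
  ultimately show ?thesis
    using exhaust_3[of a] exhaust_3[of b] c P_inner_P[OF v] V_inner_V[OF v] PV chart_point(2)[OF v]
    by (auto simp: orth_frame_def)
qed

(* Differentiating E_a \<bullet> E_b = \<delta>_ab: the connection forms are antisymmetric. *)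
lemma connection_form_antisym:
  assumes v: "v \<in> U"
  shows "connection_form b a i v = - connection_form a b i v"
proof -
  have "partial (\<lambda>v. orth_frame a v \<bullet> orth_frame b v) i v = 0"
    by (rule partial_const_on[OF U v]) (rule orth_frame_orthonormal)
  moreover have "partial (\<lambda>v. orth_frame a v \<bullet> orth_frame b v) i v
      = orth_frame a v \<bullet> partial (orth_frame b) i v + partial (orth_frame a) i v \<bullet> orth_frame b v"
    using partial_bilinear[OF bounded_bilinear_inner orth_frame_differentiable[OF v]
        orth_frame_differentiable[OF v]] .
  ultimately show ?thesis unfolding connection_form_def by (simp add: inner_commute add_eq_0_iff)
qed

lemma partial_orth_frame_inner:
  assumes v: "v \<in> U"
  shows "partial (orth_frame a) i v \<bullet> partial (orth_frame b) j v
       = (\<Sum>c\<in>UNIV. connection_form c a i v * connection_form c b j v)"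
proof -
  have "partial (orth_frame a) i v \<bullet> partial (orth_frame b) j v
     = (\<Sum>c\<in>UNIV. (partial (orth_frame a) i v \<bullet> orth_frame c v)
                  * (partial (orth_frame b) j v \<bullet> orth_frame c v))"
    by (rule orthonormal_frame_expansion) (rule orth_frame_orthonormal[OF v])
  then show ?thesis unfolding connection_form_def by (simp add: inner_commute)
qed

lemma connection_form_structure:
  assumes v: "v \<in> U"
  shows "partial (\<lambda>v. connection_form x y j v) i v - partial (\<lambda>v. connection_form x y i v) j v
     = (\<Sum>c\<in>UNIV. connection_form c x i v * connection_form c y j v)
       - (\<Sum>c\<in>UNIV. connection_form c x j v * connection_form c y i v)"
proof -
  have diff: "partial (orth_frame y) l differentiable (at v)" for l
    using Ck_orth_frame[of 2 y] v by (simp add: numeral_2_eq_2)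
  have "partial (\<lambda>v. connection_form x y l v) l' v
     = orth_frame x v \<bullet> partial (partial (orth_frame y) l) l' v
       + partial (orth_frame x) l' v \<bullet> partial (orth_frame y) l v" for l l'
    unfolding connection_form_def
    using partial_bilinear[OF bounded_bilinear_inner orth_frame_differentiable[OF v] diff] .
  moreover have "partial (partial (orth_frame y) j) i v = partial (partial (orth_frame y) i) j v"
    using partial_commute[OF U v Ck_mono[OF Ck_orth_frame[of 2 y]]] by simp
  ultimately show ?thesis by (simp add: partial_orth_frame_inner[OF v])
qed

text \<open>The coframe of the chart: \<open>w\<^sub>1 = E\<^sub>3 \<cdot> dE\<^sub>2\<close> (vertical part),
  \<open>w\<^sub>2 = E\<^sub>3 \<cdot> dE\<^sub>1\<close> and \<open>w\<^sub>3 = E\<^sub>2 \<cdot> dE\<^sub>1\<close> (horizontal part).\<close>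

definition chart_coframe :: "3 \<Rightarrow> real^3 \<Rightarrow> real^3" where
  "chart_coframe a v = (\<chi> i. if a = 1 then connection_form 3 2 i v
                            else if a = 2 then connection_form 3 1 i v else connection_form 2 1 i v)"

lemma chart_coframe_nth:
  "chart_coframe 1 v $ j = connection_form 3 2 j v"
  "chart_coframe 2 v $ j = connection_form 3 1 j v"
  "chart_coframe 3 v $ j = connection_form 2 1 j v"
  by (simp_all add: chart_coframe_def)

lemma connection_form_coframe:
  assumes v: "v \<in> U"
  shows "connection_form 3 2 i v = chart_coframe 1 v $ i"
    "connection_form 3 1 i v = chart_coframe 2 v $ i"
    "connection_form 2 1 i v = chart_coframe 3 v $ i"
    "connection_form 2 3 i v = - chart_coframe 1 v $ i"
    "connection_form 1 3 i v = - chart_coframe 2 v $ i"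
    "connection_form 1 2 i v = - chart_coframe 3 v $ i"
    "connection_form 1 1 i v = 0" "connection_form 2 2 i v = 0" "connection_form 3 3 i v = 0"
  using connection_form_antisym[OF v, of 2 3 i] connection_form_antisym[OF v, of 1 3 i]
    connection_form_antisym[OF v, of 1 2 i] connection_form_antisym[OF v, of 1 1 i]
    connection_form_antisym[OF v, of 2 2 i] connection_form_antisym[OF v, of 3 3 i]
  by (simp_all add: chart_coframe_def)

lemma Ck_chart_coframe: "Ck k U (chart_coframe a)"
proof -
  have "Ck k U (\<lambda>v. connection_form x y i v)" for x y i
    unfolding connection_form_def
    using Ck_inner[OF U Ck_orth_frame] Ck_orth_frame[of "Suc k" y] by simp
  then show ?thesis
    unfolding chart_coframe_def[abs_def]
    by (intro Ck_vec_lambda[OF U]) (cases "a = 1"; cases "a = 2"; simp)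
qed

lemma chart_coframe_structure_eq:
  assumes v: "v \<in> U"
  shows "partial (chart_coframe a) i v $ j - partial (chart_coframe a) j v $ i
     = chart_coframe (a+1) v $ i * chart_coframe (a+2) v $ j
       - chart_coframe (a+1) v $ j * chart_coframe (a+2) v $ i"
proof -
  have pc: "partial (chart_coframe a) l v $ n = partial (\<lambda>v. chart_coframe a v $ n) l v" for l n
    using Ck_differentiable[OF Ck_chart_coframe[of 1 a]] v by (simp add: partial_vec_nth)
  consider "a = 1" | "a = 2" | "a = 3" using exhaust_3 by blast
  then show ?thesis
  proof cases
    case 1
    show ?thesis unfolding pc unfolding 1 chart_coframe_nth connection_form_structure[OF v]
      by (simp add: sum_3 connection_form_coframe[OF v] mod3_simps)
  next
    case 2
    show ?thesis unfolding pc unfolding 2 chart_coframe_nth connection_form_structure[OF v]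
      by (simp add: sum_3 connection_form_coframe[OF v] mod3_simps algebra_simps)
  next
    case 3
    show ?thesis unfolding pc unfolding 3 chart_coframe_nth connection_form_structure[OF v]
      by (simp add: sum_3 connection_form_coframe[OF v] mod3_simps algebra_simps)
  qed
qed

end

context chart
begin

lemma partial_phi:
  assumes v: "v \<in> U"
  shows "partial \<phi> i v = (partial P i v, partial V i v)"
proof -
  have "\<phi> differentiable (at v)" using Ck_differentiable[OF Ck_phi[of 1]] v by simp
  then show ?thesis
    unfolding P_def V_def
    by (simp add: partial_linear[OF bounded_linear_fst] partial_linear[OF bounded_linear_snd])
qed

text \<open>The constraints \<open>|P| = 1/\<surd>c\<close>, \<open>V \<bullet> P = 0\<close>, \<open>|V| = 1\<close> differentiated: the coordinate
  vectors \<open>\<partial>\<^sub>i\<phi>\<close> are tangent to \<open>T\<^sup>1\<bbbS>\<^sup>2(c)\<close>.\<close>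

lemma partial_of_constant_inner:
  fixes F G :: "real^3 \<Rightarrow> real^3"
  assumes v: "v \<in> U" and "F differentiable (at v)" "G differentiable (at v)"
    and "\<And>v. v \<in> U \<Longrightarrow> F v \<bullet> G v = k"
  shows "F v \<bullet> partial G i v + partial F i v \<bullet> G v = 0"
  using partial_const_on[OF U v assms(4)] partial_bilinear[OF bounded_bilinear_inner assms(2,3)]
  by simp

lemma P_partial_tangent:
  assumes v: "v \<in> U"
  shows "partial P i v \<bullet> P v = 0"
  using partial_of_constant_inner[OF v P_differentiable[OF v] P_differentiable[OF v] P_inner_P,
      where i = i]
  by (simp add: inner_commute)

lemma V_partial_P:
  assumes v: "v \<in> U"
  shows "partial V i v \<bullet> P v + V v \<bullet> partial P i v = 0"
  using partial_of_constant_inner[OF v V_differentiable[OF v] P_differentiable[OF v] chart_point(2),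
      where i = i]
  by simp

lemma V_partial_tangent:
  assumes v: "v \<in> U"
  shows "V v \<bullet> partial V i v = 0"
  using partial_of_constant_inner[OF v V_differentiable[OF v] V_differentiable[OF v] V_inner_V,
      where i = i]
  by (simp add: inner_commute)

lemma partial_orth_frame_1:
  "v \<in> U \<Longrightarrow> partial (orth_frame 1) i v = sqrt c *\<^sub>R partial P i v"
  using partial_linear[OF bounded_linear_scaleR_right P_differentiable, of v "sqrt c" i]
  by (simp add: orth_frame_def[abs_def])

lemma orth_frame_2: "orth_frame 2 = V"
  by (rule ext) (simp add: orth_frame_def)

lemma horizontal_inner:
  assumes v: "v \<in> U"
  shows "partial P i v \<bullet> partial P j v
       = (chart_coframe 3 v $ i * chart_coframe 3 v $ j + chart_coframe 2 v $ i * chart_coframe 2 v $ j) / c"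
proof -
  have "c * (partial P i v \<bullet> partial P j v)
      = partial (orth_frame 1) i v \<bullet> partial (orth_frame 1) j v"
    unfolding partial_orth_frame_1[OF v] using c by (simp add: mult.assoc[symmetric])
  also have "\<dots> = chart_coframe 3 v $ i * chart_coframe 3 v $ j + chart_coframe 2 v $ i * chart_coframe 2 v $ j"
    unfolding partial_orth_frame_inner[OF v] by (simp add: sum_3 connection_form_coframe[OF v])
  finally show ?thesis using c by (simp add: field_simps)
qed

text \<open>The vertical part \<open>Y\<close> of \<open>\<partial>\<^sub>i\<phi>\<close> (see \<open>lift_coords_eq\<close>) is \<open>w\<^sub>1(\<partial>\<^sub>i) E\<^sub>3\<close>.\<close>

definition vertical_part :: "3 \<Rightarrow> real^3 \<Rightarrow> real^3" where
  "vertical_part i v = partial V i v + (c * (V v \<bullet> partial P i v)) *\<^sub>R P v"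

lemma vertical_part_frame:
  assumes v: "v \<in> U"
  shows "vertical_part i v \<bullet> orth_frame 1 v = 0" "vertical_part i v \<bullet> orth_frame 2 v = 0"
    "vertical_part i v \<bullet> orth_frame 3 v = chart_coframe 1 v $ i"
proof -
  have "partial V i v \<bullet> P v = - (V v \<bullet> partial P i v)" using V_partial_P[OF v, of i] by linarith
  then show "vertical_part i v \<bullet> orth_frame 1 v = 0"
    unfolding vertical_part_def orth_frame_def using P_inner_P[OF v] c
    by (simp add: inner_add_left field_simps)
  show "vertical_part i v \<bullet> orth_frame 2 v = 0"
    unfolding vertical_part_def orth_frame_def using V_partial_tangent[OF v] chart_point(2)[OF v]
    by (simp add: inner_add_left inner_add_right inner_commute)
  have "partial V i v \<bullet> orth_frame 3 v = chart_coframe 1 v $ i"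
    using connection_form_coframe(1)[OF v, of i]
    unfolding connection_form_def orth_frame_2 by (simp add: inner_commute)
  moreover have "P v \<bullet> orth_frame 3 v = 0" unfolding orth_frame_def using dot_cross_self by simp
  ultimately show "vertical_part i v \<bullet> orth_frame 3 v = chart_coframe 1 v $ i"
    unfolding vertical_part_def by (simp add: inner_add_left)
qed

lemma vertical_part_inner:
  assumes v: "v \<in> U"
  shows "vertical_part i v \<bullet> vertical_part j v = chart_coframe 1 v $ i * chart_coframe 1 v $ j"
  using orthonormal_frame_expansion[OF orth_frame_orthonormal[OF v], of "vertical_part i v"]
  by (simp add: sum_3 vertical_part_frame[OF v])

text \<open>The weights of the pulled-back metric in the chart coframe: on unit vectors
  \<open>\<omega> = 1/2\<close>, so the vertical weight is \<open>(1/2)\<^sup>m\<close>.\<close>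

definition metric_weight :: "real \<Rightarrow> 3 \<Rightarrow> real" where
  "metric_weight m a = (if a = 1 then (1/2) powr m else 1 / c)"

lemma pullback_metric_coframe:
  assumes v: "v \<in> U"
  shows "pullback_metric c m r \<phi> v
       = (\<chi> i j. \<Sum>a\<in>UNIV. metric_weight m a * (chart_coframe a v $ i * chart_coframe a v $ j))"
proof -
  have t1: "fst (partial \<phi> l v) \<bullet> P v = 0" for l
    using P_partial_tangent[OF v] by (simp add: partial_phi[OF v])
  have t2: "snd (partial \<phi> l v) \<bullet> P v + V v \<bullet> fst (partial \<phi> l v) = 0" for l
    using V_partial_P[OF v] by (simp add: partial_phi[OF v])
  have "hCG c m r (\<phi> v) (partial \<phi> i v) (partial \<phi> j v)
      = partial P i v \<bullet> partial P j v + (1 / (1 + (norm (V v))\<^sup>2)) powr m *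
          (vertical_part i v \<bullet> vertical_part j v
           + r * (vertical_part i v \<bullet> V v) * (vertical_part j v \<bullet> V v))" for i j
    unfolding phi_PV[of v] hCG_eq[OF c chart_point(1)[OF v] chart_point(2)[OF v] t1 t2 t1 t2]
    by (simp add: Let_def partial_phi[OF v] vertical_part_def)
  also have "\<dots> i j = (\<Sum>a\<in>UNIV. metric_weight m a * (chart_coframe a v $ i * chart_coframe a v $ j))"
    for i j
    using vertical_part_frame(2)[OF v, of i] vertical_part_frame(2)[OF v, of j]
    unfolding horizontal_inner[OF v] vertical_part_inner[OF v] chart_point(3)[OF v]
    by (simp add: sum_3 metric_weight_def orth_frame_def mod3_simps add_divide_distrib)
  finally show ?thesis unfolding pullback_metric_def by simp
qed

end

context chart
begin

lemma coframe_dmap: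
  assumes u: "u \<in> U"
  shows "chart_coframe 1 u \<bullet> h = orth_frame 3 u \<bullet> snd (dmap \<phi> u h)"
    "chart_coframe 2 u \<bullet> h = sqrt c * (orth_frame 3 u \<bullet> fst (dmap \<phi> u h))"
    "chart_coframe 3 u \<bullet> h = sqrt c * (V u \<bullet> fst (dmap \<phi> u h))"
proof -
  have dmap: "fst (dmap \<phi> u h) = (\<Sum>i\<in>UNIV. h $ i *\<^sub>R partial P i u)"
    "snd (dmap \<phi> u h) = (\<Sum>i\<in>UNIV. h $ i *\<^sub>R partial V i u)"
    unfolding dmap_def by (simp_all add: fst_sum snd_sum partial_phi[OF u])
  have cf: "chart_coframe k u \<bullet> h = (\<Sum>i\<in>UNIV. chart_coframe k u $ i * h $ i)" for k
    by (simp add: inner_vec_def)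
  show "chart_coframe 1 u \<bullet> h = orth_frame 3 u \<bullet> snd (dmap \<phi> u h)"
    unfolding dmap cf chart_coframe_nth connection_form_def orth_frame_2
    by (simp add: inner_sum_right mult.commute)
  show "chart_coframe 2 u \<bullet> h = sqrt c * (orth_frame 3 u \<bullet> fst (dmap \<phi> u h))"
    unfolding dmap cf chart_coframe_nth connection_form_def partial_orth_frame_1[OF u]
    by (simp add: inner_sum_right sum_distrib_left mult_ac)
  show "chart_coframe 3 u \<bullet> h = sqrt c * (V u \<bullet> fst (dmap \<phi> u h))"
    unfolding dmap cf chart_coframe_nth connection_form_def partial_orth_frame_1[OF u]
      orth_frame_2
    by (simp add: inner_sum_right sum_distrib_left mult_ac)
qed

lemma const_structure_coframe_near:
  assumes u0: "u0 \<in> U" and det: "det (\<chi> a i. chart_coframe a u0 $ i) \<noteq> 0"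
  obtains U' where "const_structure_coframe U' u0 chart_coframe (metric_weight m)
                       (pullback_metric c m r \<phi>)"
proof
  define U' where "U' = U \<inter> (\<lambda>v. det (\<chi> a i. chart_coframe a v $ i)) -` (UNIV - {0})"
  have C: "Ck k U (\<lambda>v. chart_coframe a v $ i)" for a i k
    using Ck_vec_nth[OF U Ck_chart_coframe] .
  have "Ck k U (\<lambda>v. det (\<chi> a i. chart_coframe a v $ i))" for k
    unfolding det_3 by (simp, intro Ck_add[OF U] Ck_diff[OF U] Ck_mult[OF U] C)
  from this[of 0] have "open U'"
    unfolding U'_def by (simp add: continuous_open_preimage[OF _ U] open_Diff)
  moreover have "U' \<subseteq> U" unfolding U'_def by blast
  ultimately show "const_structure_coframe U' u0 chart_coframe (metric_weight m)
                     (pullback_metric c m r \<phi>)"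
    using u0 det c
    by unfold_locales (auto simp: U'_def metric_weight_def Ck_subset[OF _ Ck_chart_coframe]
        pullback_metric_coframe chart_coframe_structure_eq)
qed

(* The frame components of the lifts e^h, f^h, f^v at \<phi>(u0) = (x, e): they are multiples
   of the dual frame vectors 3, 2 and 1, where f = \<sigma> E_3 with \<sigma> = \<plusminus>1. *)
lemma lift_coframe_components:
  assumes u0: "u0 \<in> U" and at_u0: "\<phi> u0 = (x, e)"
    and f: "f \<bullet> x = 0" "norm f = 1" "e \<bullet> f = 0"
    and a: "dmap \<phi> u0 a = hlift c x e e"
    and b: "dmap \<phi> u0 b = hlift c x e f"
    and d: "dmap \<phi> u0 d = vlift x e f"
  obtains \<sigma> where "\<sigma> * \<sigma> = 1"
    "\<And>k. chart_coframe k u0 \<bullet> a = (if k = 3 then sqrt c else 0)"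
    "\<And>k. chart_coframe k u0 \<bullet> b = (if k = 2 then sqrt c * \<sigma> else 0)"
    "\<And>k. chart_coframe k u0 \<bullet> d = (if k = 1 then \<sigma> else 0)"
proof
  have PV: "P u0 = x" "V u0 = e" using at_u0 by (simp_all add: P_def V_def)
  have x: "norm x = 1 / sqrt c" "e \<bullet> x = 0" "e \<bullet> e = 1"
    using chart_point[OF u0] PV by (auto simp: dot_square_norm)
  have E3: "orth_frame 3 u0 \<bullet> x = 0" "orth_frame 3 u0 \<bullet> e = 0"
    unfolding orth_frame_def PV using dot_cross_self[of x e] by (simp_all add: inner_commute)
  have "f \<bullet> f = (\<Sum>k\<in>UNIV. (f \<bullet> orth_frame k u0) * (f \<bullet> orth_frame k u0))"
    by (rule orthonormal_frame_expansion) (rule orth_frame_orthonormal[OF u0])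
  then show "(orth_frame 3 u0 \<bullet> f) * (orth_frame 3 u0 \<bullet> f) = 1"
    using f PV by (simp add: sum_3 orth_frame_def inner_commute dot_square_norm)
  have "dmap \<phi> u0 a = (e, (- c) *\<^sub>R x)" "dmap \<phi> u0 b = (f, 0)" "dmap \<phi> u0 d = (0, f)"
    using a b d hlift_eq[OF c x(1) x(2) x(2)] hlift_eq[OF c x(1) x(2) f(1)] f(3) x(3) vlift_eq
    by simp_all
  then show "chart_coframe k u0 \<bullet> a = (if k = 3 then sqrt c else 0)"
    "chart_coframe k u0 \<bullet> b = (if k = 2 then sqrt c * (orth_frame 3 u0 \<bullet> f) else 0)"
    "chart_coframe k u0 \<bullet> d = (if k = 1 then orth_frame 3 u0 \<bullet> f else 0)" for k
    using exhaust_3[of k] coframe_dmap[OF u0] E3 PV x f(3)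
    by (auto simp: inner_commute)
qed

end

lemma det_nonzero_of_frame_components:
  fixes w :: "3 \<Rightarrow> real^3" and a b d :: "real^3"
  assumes a: "\<And>k. w k \<bullet> a = (if k = 3 then \<alpha> else 0)"
    and b: "\<And>k. w k \<bullet> b = (if k = 2 then \<beta> else 0)"
    and d: "\<And>k. w k \<bullet> d = (if k = 1 then \<gamma> else 0)"
    and nz: "\<alpha> * \<beta> * \<gamma> \<noteq> 0"
  shows "det (\<chi> k i. w k $ i) \<noteq> 0"
proof -
  define M :: "real^3^3" where "M = (\<chi> i q. if q = 1 then a $ i else if q = 2 then b $ i else d $ i)"
  have "(\<chi> k i. w k $ i) ** M = (\<chi> k q. if q = 1 then w k \<bullet> a else if q = 2 then w k \<bullet> b else w k \<bullet> d)"
    unfolding M_def matrix_matrix_mult_def inner_vec_def by (simp add: vec_eq_iff)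
  then have "det ((\<chi> k i. w k $ i) ** M) = - (\<alpha> * \<beta> * \<gamma>)"
    unfolding det_3 a b d by (simp add: mod3_simps)
  then show ?thesis using nz by (auto simp: det_mul)
qed

text \<open>The frame curvatures for the weights \<open>(l, 1/c, 1/c)\<close>; these are the curvatures of a
  Berger sphere.\<close>

lemma frame_curvatures_berger:
  fixes D :: "3 \<Rightarrow> real"
  assumes D: "D 1 = l" "D 2 = 1 / c" "D 3 = 1 / c" and c: "c > 0" and l: "l > 0"
  shows "frame_riemann (frame_connection D) 3 3 2 2 / D 2 = c * (1 - 3 * l * c / 4)"
    "frame_riemann (frame_connection D) 3 3 1 1 / D 1 = l * c\<^sup>2 / 4"
    "frame_riemann (frame_connection D) 2 2 1 1 / D 1 = l * c\<^sup>2 / 4"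
  using c l
  by (simp_all add: frame_riemann_def frame_connection_def sum_3 levi_civita_simps mod3_simps D)
     (simp_all add: field_simps power2_eq_square)

lemma weight_arithmetic:
  fixes c m :: real
  assumes "c > 0"
  shows "c * (1 - 3 * ((1/2) powr m) * c / 4) = c - 3 * c\<^sup>2 / 2 powr (m + 2)"
    "(1/2) powr m * c\<^sup>2 / 4 = c\<^sup>2 / 2 powr (m + 2)"
    "m = log 2 c \<Longrightarrow> c - 3 * c\<^sup>2 / 2 powr (m + 2) = c / 4"
    "m = log 2 c \<Longrightarrow> c\<^sup>2 / 2 powr (m + 2) = c / 4"
proof -
  have p: "2 powr (m + 2) = 2 powr m * 4" "(1/2) powr m = 1 / 2 powr m"
    by (simp_all add: powr_add powr_divide)
  show "c * (1 - 3 * ((1/2) powr m) * c / 4) = c - 3 * c\<^sup>2 / 2 powr (m + 2)"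
    "(1/2) powr m * c\<^sup>2 / 4 = c\<^sup>2 / 2 powr (m + 2)"
    unfolding p by (simp_all add: field_simps power2_eq_square)
  assume "m = log 2 c"
  then have "2 powr m = c" using assms by simp
  then show "c - 3 * c\<^sup>2 / 2 powr (m + 2) = c / 4" "c\<^sup>2 / 2 powr (m + 2) = c / 4"
    unfolding p using assms by (simp_all add: field_simps power2_eq_square)
qed

lemma (in chart) sectional_curvatures_at_lifts:
  assumes u0: "u0 \<in> U" and at_u0: "\<phi> u0 = (x, e)"
    and f: "f \<bullet> x = 0" "norm f = 1" "e \<bullet> f = 0"
    and lifts: "dmap \<phi> u0 a = hlift c x e e" "dmap \<phi> u0 b = hlift c x e f"
      "dmap \<phi> u0 d = vlift x e f"
  shows "sectional_curvature (pullback_metric c m r \<phi>) u0 a b = c * (1 - 3 * ((1/2) powr m) * c / 4)"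
    "sectional_curvature (pullback_metric c m r \<phi>) u0 a d = (1/2) powr m * c\<^sup>2 / 4"
    "sectional_curvature (pullback_metric c m r \<phi>) u0 b d = (1/2) powr m * c\<^sup>2 / 4"
proof -
  obtain \<sigma> where \<sigma>: "\<sigma> * \<sigma> = 1" and a: "\<And>k. chart_coframe k u0 \<bullet> a = (if k = 3 then sqrt c else 0)"
    and b: "\<And>k. chart_coframe k u0 \<bullet> b = (if k = 2 then sqrt c * \<sigma> else 0)"
    and d: "\<And>k. chart_coframe k u0 \<bullet> d = (if k = 1 then \<sigma> else 0)"
    using lift_coframe_components[OF u0 at_u0 f lifts] by blast
  have nz: "sqrt c \<noteq> 0" "\<sigma> \<noteq> 0" "sqrt c * \<sigma> \<noteq> 0" using c \<sigma> by auto
  obtain U' where "const_structure_coframe U' u0 chart_coframe (metric_weight m)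
                     (pullback_metric c m r \<phi>)"
    using const_structure_coframe_near[OF u0 det_nonzero_of_frame_components[OF a b d]] nz by auto
  then interpret fr: const_structure_coframe U' u0 chart_coframe "metric_weight m"
    "pullback_metric c m r \<phi>" .
  have "metric_weight m 1 = (1/2) powr m" "metric_weight m 2 = 1 / c" "metric_weight m 3 = 1 / c"
    by (simp_all add: metric_weight_def mod3_simps)
  note berger = frame_curvatures_berger[OF this c]
  note plane = fr.sectional_curvature_frame_plane
  show "sectional_curvature (pullback_metric c m r \<phi>) u0 a b = c * (1 - 3 * ((1/2) powr m) * c / 4)"
    using plane[of 3 2 "sqrt c" "sqrt c * \<sigma>", OF _ _ _ a b] nz berger(1) by (simp add: mod3_simps)
  show "sectional_curvature (pullback_metric c m r \<phi>) u0 a d = (1/2) powr m * c\<^sup>2 / 4"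
    using plane[of 3 1 "sqrt c" \<sigma>, OF _ _ _ a d] nz berger(2) by (simp add: mod3_simps)
  show "sectional_curvature (pullback_metric c m r \<phi>) u0 b d = (1/2) powr m * c\<^sup>2 / 4"
    using plane[of 2 1 "sqrt c * \<sigma>" \<sigma>, OF _ _ _ b d] nz berger(3) by (simp add: mod3_simps)
qed

theorem proposition3:
  fixes c m r :: real and x e f :: "real^3"
    and \<phi> :: "real^3 \<Rightarrow> (real^3) \<times> (real^3)" and U :: "(real^3) set" and u0 a b d :: "real^3"
  assumes "c > 0" and "r \<ge> 0"
    and "(x, e) \<in> T1S2 c"
    and "f \<bullet> x = 0" and "norm f = 1" and "e \<bullet> f = 0"
    and "open U" and "u0 \<in> U" and "smooth_on3 U \<phi>" and "\<phi> ` U \<subseteq> T1S2 c"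
    and "\<phi> u0 = (x, e)" and "inj (dmap \<phi> u0)"
    and "dmap \<phi> u0 a = hlift c x e e"
    and "dmap \<phi> u0 b = hlift c x e f"
    and "dmap \<phi> u0 d = vlift x e f"
  shows "sectional_curvature (pullback_metric c m r \<phi>) u0 a b = c - 3 * c\<^sup>2 / 2 powr (m + 2)
       \<and> sectional_curvature (pullback_metric c m r \<phi>) u0 a d = c\<^sup>2 / 2 powr (m + 2)
       \<and> sectional_curvature (pullback_metric c m r \<phi>) u0 b d = c\<^sup>2 / 2 powr (m + 2)
       \<and> (m = log 2 c \<longrightarrow>
            sectional_curvature (pullback_metric c m r \<phi>) u0 a b = c / 4
          \<and> sectional_curvature (pullback_metric c m r \<phi>) u0 a d = c / 4
          \<and> sectional_curvature (pullback_metric c m r \<phi>) u0 b d = c / 4)"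
proof -
  interpret chart c \<phi> U using assms(1,7,9,10) by unfold_locales
  note K = sectional_curvatures_at_lifts[OF assms(8,11,4,5,6,13,14,15), of m r]
  have "sectional_curvature (pullback_metric c m r \<phi>) u0 a b = c - 3 * c\<^sup>2 / 2 powr (m + 2)"
    "sectional_curvature (pullback_metric c m r \<phi>) u0 a d = c\<^sup>2 / 2 powr (m + 2)"
    "sectional_curvature (pullback_metric c m r \<phi>) u0 b d = c\<^sup>2 / 2 powr (m + 2)"
    using K weight_arithmetic(1,2)[OF assms(1)] by simp_all
  then show ?thesis using weight_arithmetic(3,4)[OF assms(1)] by auto
qed

end
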